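(* Let $V$ be a complex vector space of dimension $n$ with a Hermitian inner product, let $k\ge 0$ and let $u$ be a (complex) $k$-form on $V$. Then $$(-1)^{k(k+1)/2}\,\lvert u\rvert^2\,\omega^{[n]}=\sum_{l=0}^{n}(-1)^l\, b_l\;\Lambda^{[l]}u\wedge\Lambda^{[l]}\overline{\mathbf I u}\wedge\omega^{[n-k+2l]},$$ where $(b_l)_{l\ge0}$ is the integer sequence defined by $b_0=1$ and $\sum_{l=0}^{p}(-1)^l\binom{p}{l}^2 b_l=0$ for all $p\ge1$.
   Context: $V$ is a complex vector space of dimension $n$ with Hermitian inner product $h$, and $\omega=-\operatorname{Im}h$ is the associated positive real $(1,1)$-form. For an element $A$ of an algebra (or an operator) set $A^{[k]}=A^k/k!$ for $k\ge0$; by convention $\omega^{[m]}=0$ for $m<0$ or $m>n$. The exterior algebra $\bigwedge^*V^*$ carries the Hermitian inner product induced by $h$, with Hodge star $*$, so that $\langle u,v\rangle\,\omega^{[n]}=u\wedge *\overline v$ and $\lvert u\rvert^2=\langle u,u\rangle$. $L$ is the Lefschetz operator $L u=\omega\wedge u$ and $\Lambda$ its adjoint with respect to this inner product. $\mathbf I=\sum_{p,q}i^{p-q}\pi_{p,q}$, where $\pi_{p,q}$ is the orthogonal projection of $\bigwedge^*V^*$ onto the $(p,q)$-forms. *)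

theory Defs
  imports Complex_Main
begin

text \<open>Model: V = C^n with its standard Hermitian product (z_1..z_n orthonormal coordinates).
  A complex form on V is written uniquely as a sum of c_S e_S, where S ranges over subsets of
  the 2n "letters" {0..<2n}: letter j < n stands for dz_j, letter n+j stands for the
  conjugate of dz_j, and e_S is the wedge product of the letters of S in increasing order.\<close>

type_synonym form = "nat set \<Rightarrow> complex"

definition letters :: "nat \<Rightarrow> nat set" where
  "letters n = {..<2*n}"

definition is_form :: "nat \<Rightarrow> form \<Rightarrow> bool" where
  "is_form n u \<longleftrightarrow> (\<forall>S. \<not> S \<subseteq> letters n \<longrightarrow> u S = 0)"

definition is_kform :: "nat \<Rightarrow> nat \<Rightarrow> form \<Rightarrow> bool" where
  "is_kform n k u \<longleftrightarrow> is_form n u \<and> (\<forall>S. card S \<noteq> k \<longrightarrow> u S = 0)"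

definition bas :: "nat set \<Rightarrow> form" where
  "bas S = (\<lambda>T. if T = S then 1 else 0)"

definition scale :: "complex \<Rightarrow> form \<Rightarrow> form" where
  "scale c u = (\<lambda>S. c * u S)"

definition wedge :: "nat \<Rightarrow> form \<Rightarrow> form \<Rightarrow> form" where
  "wedge n u v = (\<lambda>R. if R \<subseteq> letters n then
      (\<Sum>S\<in>Pow R. (-1) ^ card {(s,t). s \<in> S \<and> t \<in> R - S \<and> t < s} * u S * v (R - S))
    else 0)"

text \<open>omega = -Im h = (i/2) sum_j dz_j wedge conj(dz_j)\<close>
definition omega :: "nat \<Rightarrow> form" where
  "omega n = (\<lambda>S. if \<exists>j<n. S = {j, n + j} then \<i> / 2 else 0)"

definition Lef :: "nat \<Rightarrow> form \<Rightarrow> form" where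
  "Lef n u = wedge n (omega n) u"

text \<open>Hermitian inner product on forms induced by h.  In the basis e_S it is orthogonal,
  with |dz_j|^2 = |conj dz_j|^2 = 2 (since dz_j = dx_j + i dy_j with dx_j, dy_j orthonormal),
  hence |e_S|^2 = 2^card S.\<close>
definition form_inner :: "nat \<Rightarrow> form \<Rightarrow> form \<Rightarrow> complex" where
  "form_inner n u v = (\<Sum>S\<in>Pow (letters n). 2 ^ card S * u S * cnj (v S))"

definition Lam :: "nat \<Rightarrow> form \<Rightarrow> form" where
  "Lam n u = (THE w. is_form n w \<and>
      (\<forall>v. is_form n v \<longrightarrow> form_inner n w v = form_inner n u (Lef n v)))"

definition Lam_pow :: "nat \<Rightarrow> nat \<Rightarrow> form \<Rightarrow> form" where
  "Lam_pow n l u = scale (1 / of_nat (fact l)) ((Lam n ^^ l) u)"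

definition omega_pow :: "nat \<Rightarrow> int \<Rightarrow> form" where
  "omega_pow n m = (if m < 0 \<or> m > int n then (\<lambda>_. 0)
      else scale (1 / of_nat (fact (nat m))) ((Lef n ^^ nat m) (bas {})))"

text \<open>Orthogonal projection onto (p,q)-forms (the basis e_S is orthogonal and e_S has
  type (card (S \<inter> {..<n}), card (S \<inter> {n..<2n}))).\<close>
definition proj_pq :: "nat \<Rightarrow> nat \<Rightarrow> nat \<Rightarrow> form \<Rightarrow> form" where
  "proj_pq n p q u = (\<lambda>S. if S \<subseteq> letters n \<and> card (S \<inter> {..<n}) = p \<and> card (S \<inter> {n..<2*n}) = q
      then u S else 0)"

definition Iop :: "nat \<Rightarrow> form \<Rightarrow> form" where
  "Iop n u = (\<lambda>S. \<Sum>p\<le>2*n. \<Sum>q\<le>2*n. \<i> powi (int p - int q) * proj_pq n p q u S)"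

text \<open>Complex conjugation of forms: conj(c e_S) = conj(c) conj(e_S), where conj(e_S) is the
  wedge of the conjugated letters (dz_j and conj dz_j swapped) in the order of S; reordering
  gives the sign (-1)^(number of inversions).\<close>
definition swp :: "nat \<Rightarrow> nat \<Rightarrow> nat" where
  "swp n a = (if a < n then a + n else a - n)"

definition fconj :: "nat \<Rightarrow> form \<Rightarrow> form" where
  "fconj n u = (\<lambda>T. if T \<subseteq> letters n then
      (let S = swp n ` T in
        (-1) ^ card {(s,t). s \<in> S \<and> t \<in> S \<and> s < t \<and> swp n t < swp n s} * cnj (u S))
    else 0)"

end

theory Submission
  imports Defs
begin

text \<open>Both sides are top-degree forms, so only their coefficient on the volume element matters.
  The letters dz_j, conj dz_j form n conjugate pairs; Lambda removes pairs and omega^[m] is the sum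
  of all products of m pairs.  Expanding the top coefficient of
  Lambda^[l] u \<and> Lambda^[l] conj (I u) \<and> omega^[n-k+2l] gives a double sum of u_S1 conj (u_S2),
  and a term survives only if S1 and S2 have the same unpaired letters; their pairs are then
  indexed by sets A1, A2 of equal size a.  Up to a constant independent of l, the weight of
  u_S1 conj (u_S2) is the number of l-sets J1 \<subseteq> A1, J2 \<subseteq> A2 with A1 - J1 and A2 - J2
  disjoint, weighted by (-1)^l b_l.  By inclusion-exclusion over Z \<subseteq> A1 \<inter> A2 this equals
  \<Sum>_Z (-1)^|Z| \<Sum>_l (-1)^l b_l C(a - |Z|, l)^2, and the recurrence defining b leaves only
  Z = A1 = A2.  So only the diagonal S1 = S2 survives, and a sign computation turns the diagonal
  terms into (-1)^(k(k+1)/2) |u|^2 times the coefficient of omega^[n].\<close>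

section \<open>Shuffle signs\<close>

definition inversions :: "nat set \<Rightarrow> nat set \<Rightarrow> nat" where
  "inversions A B = card {(a,b). a \<in> A \<and> b \<in> B \<and> b < a}"

definition shuffle_sign :: "nat set \<Rightarrow> nat set \<Rightarrow> complex" where
  "shuffle_sign A B = (-1) ^ inversions A B"

lemma wedge_shuffle_sign: "wedge n u v = (\<lambda>R. if R \<subseteq> letters n then
      (\<Sum>S\<in>Pow R. shuffle_sign S (R - S) * u S * v (R - S)) else 0)"
  unfolding wedge_def shuffle_sign_def inversions_def by (rule refl)

lemma shuffle_sign_square: "shuffle_sign A B * shuffle_sign A B = 1"
  by (simp add: shuffle_sign_def flip: power_add)

lemma cnj_shuffle_sign[simp]: "cnj (shuffle_sign A B) = shuffle_sign A B"
  by (simp add: shuffle_sign_def)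

lemma shuffle_sign_cases: "shuffle_sign A B = 1 \<or> shuffle_sign A B = -1"
  by (simp add: shuffle_sign_def minus_one_power_iff)

lemma shuffle_sign_empty_left[simp]: "shuffle_sign {} B = 1"
  and shuffle_sign_empty_right[simp]: "shuffle_sign A {} = 1"
  by (simp_all add: shuffle_sign_def inversions_def)

lemma minus_one_power_eq_if_even: "even (x + y) \<Longrightarrow> (-1::complex) ^ x = (-1) ^ y"
  by (auto simp: minus_one_power_iff)

lemma finite_inversion_pairs: "finite A \<Longrightarrow> finite B \<Longrightarrow> finite {(a,b). a \<in> A \<and> b \<in> B \<and> b < a}"
  by (rule finite_subset[of _ "A \<times> B"]) auto

lemma inversions_Un_right:
  assumes "finite A" "finite B" "finite C" "B \<inter> C = {}"
  shows "inversions A (B \<union> C) = inversions A B + inversions A C"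
proof -
  have e: "{(a,b). a \<in> A \<and> b \<in> B \<union> C \<and> b < a} =
     {(a,b). a \<in> A \<and> b \<in> B \<and> b < a} \<union> {(a,b). a \<in> A \<and> b \<in> C \<and> b < a}" by auto
  show ?thesis unfolding inversions_def e
    by (rule card_Un_disjoint) (use assms finite_inversion_pairs in auto)
qed

lemma inversions_Un_left:
  assumes "finite A" "finite B" "finite C" "B \<inter> C = {}"
  shows "inversions (B \<union> C) A = inversions B A + inversions C A"
proof -
  have e: "{(a,b). a \<in> B \<union> C \<and> b \<in> A \<and> b < a} =
     {(a,b). a \<in> B \<and> b \<in> A \<and> b < a} \<union> {(a,b). a \<in> C \<and> b \<in> A \<and> b < a}" by auto
  show ?thesis unfolding inversions_def e
    by (rule card_Un_disjoint) (use assms finite_inversion_pairs in auto)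
qed

lemma shuffle_sign_Un_right:
  "finite A \<Longrightarrow> finite B \<Longrightarrow> finite C \<Longrightarrow> B \<inter> C = {} \<Longrightarrow>
    shuffle_sign A (B \<union> C) = shuffle_sign A B * shuffle_sign A C"
  by (simp add: shuffle_sign_def inversions_Un_right power_add)

lemma shuffle_sign_Un_left:
  "finite A \<Longrightarrow> finite B \<Longrightarrow> finite C \<Longrightarrow> B \<inter> C = {} \<Longrightarrow>
    shuffle_sign (B \<union> C) A = shuffle_sign B A * shuffle_sign C A"
  by (simp add: shuffle_sign_def inversions_Un_left power_add)

lemma inversions_swap:
  assumes "finite A" "finite B" "A \<inter> B = {}"
  shows "inversions A B + inversions B A = card A * card B"
proof -
  let ?X = "{(a,b). a \<in> A \<and> b \<in> B \<and> b < a}"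
  let ?Y = "{(a,b). a \<in> A \<and> b \<in> B \<and> a < b}"
  have "A \<times> B = ?X \<union> ?Y" using assms(3) by (auto simp: linorder_neq_iff)
  moreover have "?X \<inter> ?Y = {}" by auto
  moreover have "finite ?X" "finite ?Y" using assms(1,2)
    by (auto intro: finite_subset[of _ "A \<times> B"])
  ultimately have "card A * card B = card ?X + card ?Y"
    using card_Un_disjoint[of ?X ?Y] card_cartesian_product[of A B] by simp
  moreover have "?Y = prod.swap ` {(a,b). a \<in> B \<and> b \<in> A \<and> b < a}" by auto
  then have "card ?Y = inversions B A"
    unfolding inversions_def by (simp add: card_image)
  ultimately show ?thesis unfolding inversions_def by simp
qed

lemma shuffle_sign_swap:
  "finite A \<Longrightarrow> finite B \<Longrightarrow> A \<inter> B = {} \<Longrightarrow>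
    shuffle_sign A B * shuffle_sign B A = (-1) ^ (card A * card B)"
  by (simp add: shuffle_sign_def inversions_swap flip: power_add)

lemma shuffle_sign_commute_even:
  assumes "finite A" "finite B" "A \<inter> B = {}" "even (card A * card B)"
  shows "shuffle_sign B A = shuffle_sign A B"
proof -
  have "shuffle_sign A B * shuffle_sign B A = 1" using shuffle_sign_swap[OF assms(1-3)] assms(4) by simp
  then show ?thesis using shuffle_sign_cases[of A B] shuffle_sign_cases[of B A] by auto
qed

lemma inversions_shift: "inversions ((\<lambda>x. x + n) ` X) ((\<lambda>x. x + n) ` Y) = inversions X Y"
proof -
  have "{(a,b). a \<in> (\<lambda>x. x + n) ` X \<and> b \<in> (\<lambda>x. x + n) ` Y \<and> b < a} =
        (\<lambda>(a,b). (a + n, b + n)) ` {(a,b). a \<in> X \<and> b \<in> Y \<and> b < a}" by auto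
  moreover have "inj (\<lambda>(a::nat,b::nat). (a + n, b + n))" by (auto simp: inj_def)
  ultimately show ?thesis unfolding inversions_def by (simp add: card_image inj_on_subset[of _ UNIV])
qed

lemma inversions_all:
  assumes "finite A" "finite B" "\<And>x y. x \<in> A \<Longrightarrow> y \<in> B \<Longrightarrow> y < x"
  shows "inversions A B = card A * card B"
proof -
  have "{(x,y). x \<in> A \<and> y \<in> B \<and> y < x} = A \<times> B" using assms(3) by auto
  then show ?thesis unfolding inversions_def by (simp add: card_cartesian_product)
qed

lemma inversions_none:
  assumes "\<And>x y. x \<in> A \<Longrightarrow> y \<in> B \<Longrightarrow> \<not> y < x"
  shows "inversions A B = 0"
proof -
  have "{(x,y). x \<in> A \<and> y \<in> B \<and> y < x} = {}" using assms by blast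
  then show ?thesis unfolding inversions_def by (simp only: card.empty)
qed

section \<open>Conjugate pairs of letters\<close>

definition conj_pair :: "nat \<Rightarrow> nat \<Rightarrow> nat set" where
  "conj_pair n j = {j, n + j}"

definition conj_pairs :: "nat \<Rightarrow> nat set \<Rightarrow> nat set" where
  "conj_pairs n J = J \<union> (\<lambda>j. n + j) ` J"

lemma finite_letters[simp]: "finite (letters n)"
  by (simp add: letters_def)

lemma finite_subset_lessThan: "J \<subseteq> {..<(n::nat)} \<Longrightarrow> finite J"
  using finite_subset by blast

lemma finite_conj_pair[simp]: "finite (conj_pair n j)"
  by (simp add: conj_pair_def)

lemma finite_conj_pairs[simp]: "finite J \<Longrightarrow> finite (conj_pairs n J)"
  by (simp add: conj_pairs_def)

lemma card_conj_pair: "j < n \<Longrightarrow> card (conj_pair n j) = 2"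
  by (simp add: conj_pair_def)

lemma conj_pair_inj: "j < n \<Longrightarrow> j' < n \<Longrightarrow> conj_pair n j = conj_pair n j' \<Longrightarrow> j = j'"
  by (auto simp: conj_pair_def doubleton_eq_iff)

lemma conj_pair_subset_letters: "j < n \<Longrightarrow> conj_pair n j \<subseteq> letters n"
  by (auto simp: conj_pair_def letters_def)

lemma conj_pairs_empty[simp]: "conj_pairs n {} = {}"
  by (simp add: conj_pairs_def)

lemma conj_pairs_insert: "conj_pairs n (insert j J) = conj_pair n j \<union> conj_pairs n J"
  by (auto simp: conj_pairs_def conj_pair_def)

lemma conj_pairs_Un: "conj_pairs n (X \<union> Y) = conj_pairs n X \<union> conj_pairs n Y"
  by (auto simp: conj_pairs_def)

lemma conj_pairs_Diff: "X \<subseteq> {..<n} \<Longrightarrow> Y \<subseteq> {..<n} \<Longrightarrow> conj_pairs n (X - Y) = conj_pairs n X - conj_pairs n Y"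
  by (auto simp: conj_pairs_def)

lemma conj_pairs_mono: "X \<subseteq> Y \<Longrightarrow> conj_pairs n X \<subseteq> conj_pairs n Y"
  by (auto simp: conj_pairs_def)

lemma conj_pairs_disjoint:
  "X \<subseteq> {..<n} \<Longrightarrow> Y \<subseteq> {..<n} \<Longrightarrow> X \<inter> Y = {} \<Longrightarrow> conj_pairs n X \<inter> conj_pairs n Y = {}"
  by (auto simp: conj_pairs_def)

lemma conj_pair_conj_pairs_disjoint:
  "J \<subseteq> {..<n} \<Longrightarrow> j < n \<Longrightarrow> j \<notin> J \<Longrightarrow> conj_pair n j \<inter> conj_pairs n J = {}"
  by (auto simp: conj_pair_def conj_pairs_def)

lemma conj_pairs_subset_letters: "J \<subseteq> {..<n} \<Longrightarrow> conj_pairs n J \<subseteq> letters n"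
  by (auto simp: conj_pairs_def letters_def)

lemma conj_pair_subset_conj_pairs:
  "J \<subseteq> {..<n} \<Longrightarrow> j < n \<Longrightarrow> conj_pair n j \<subseteq> conj_pairs n J \<longleftrightarrow> j \<in> J"
  by (auto simp: conj_pair_def conj_pairs_def)

lemma conj_pairs_Diff_conj_pair:
  "J \<subseteq> {..<n} \<Longrightarrow> j < n \<Longrightarrow> conj_pairs n J - conj_pair n j = conj_pairs n (J - {j})"
  by (auto simp: conj_pair_def conj_pairs_def)

lemma mem_conj_pairs:
  "J \<subseteq> {..<n} \<Longrightarrow> x \<in> conj_pairs n J \<longleftrightarrow> (if x < n then x \<in> J else x - n \<in> J \<and> n \<le> x)"
  by (auto simp: conj_pairs_def image_iff) (metis add_diff_inverse_nat)

lemma conj_pairs_lessThan: "conj_pairs n {..<n} = letters n"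
  unfolding set_eq_iff mem_conj_pairs[OF order_refl] by (auto simp: letters_def)

lemma card_conj_pairs: "J \<subseteq> {..<n} \<Longrightarrow> card (conj_pairs n J) = 2 * card J"
proof -
  assume J: "J \<subseteq> {..<n}"
  then have "card (conj_pairs n J) = card J + card ((\<lambda>j. n + j) ` J)"
    unfolding conj_pairs_def by (intro card_Un_disjoint) (auto dest: finite_subset_lessThan)
  also have "card ((\<lambda>j. n + j) ` J) = card J" by (rule card_image) (auto simp: inj_on_def)
  finally show ?thesis by simp
qed

lemma odd_inversions_conj_pair:
  assumes "j < n" "j' < n" "j \<noteq> j'"
  shows "odd (inversions (conj_pair n j) (conj_pair n j'))"
proof (cases "j < j'")
  case True
  then have "{(a,b). a \<in> conj_pair n j \<and> b \<in> conj_pair n j' \<and> b < a} = {(n+j, j')}"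
    using assms by (auto simp: conj_pair_def)
  then show ?thesis by (simp add: inversions_def)
next
  case False
  then have "j' < j" using assms by auto
  then have "{(a,b). a \<in> conj_pair n j \<and> b \<in> conj_pair n j' \<and> b < a} = {(j, j'), (n+j, j'), (n+j, n+j')}"
    using assms by (auto simp: conj_pair_def)
  moreover have "card {(j, j'), (n+j, j'), (n+j, n+j')} = 3" using assms \<open>j' < j\<close> by auto
  ultimately show ?thesis by (simp add: inversions_def)
qed

lemma shuffle_sign_conj_pair_conj_pair:
  "j < n \<Longrightarrow> j' < n \<Longrightarrow> j \<noteq> j' \<Longrightarrow> shuffle_sign (conj_pair n j) (conj_pair n j') = -1"
  using odd_inversions_conj_pair by (simp add: shuffle_sign_def)

lemma shuffle_sign_conj_pair_conj_pairs:
  assumes "finite J" "J \<subseteq> {..<n}" "j < n" "j \<notin> J"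
  shows "shuffle_sign (conj_pair n j) (conj_pairs n J) = (-1) ^ card J"
  using assms
proof (induction J rule: finite_induct)
  case (insert x F)
  have "shuffle_sign (conj_pair n j) (conj_pairs n (insert x F)) =
      shuffle_sign (conj_pair n j) (conj_pair n x) * shuffle_sign (conj_pair n j) (conj_pairs n F)"
    unfolding conj_pairs_insert using insert conj_pair_conj_pairs_disjoint[of F n x]
    by (intro shuffle_sign_Un_right) auto
  also have "\<dots> = - ((-1) ^ card F)" using insert by (simp add: shuffle_sign_conj_pair_conj_pair)
  finally show ?case using insert by simp
qed simp

lemma shuffle_sign_conj_pairs_conj_pair:
  assumes "finite J" "J \<subseteq> {..<n}" "j < n" "j \<notin> J"
  shows "shuffle_sign (conj_pairs n J) (conj_pair n j) = (-1) ^ card J"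
  using shuffle_sign_commute_even[of "conj_pair n j" "conj_pairs n J"]
    shuffle_sign_conj_pair_conj_pairs[OF assms] conj_pair_conj_pairs_disjoint[OF assms(2-4)]
    assms(1) card_conj_pair[OF assms(3)]
  by simp

lemma shuffle_sign_conj_pairs:
  assumes "X \<subseteq> {..<n}" "Y \<subseteq> {..<n}" "X \<inter> Y = {}"
  shows "shuffle_sign (conj_pairs n X) (conj_pairs n Y) = (-1) ^ (card X * card Y)"
proof -
  have fY: "finite Y" using assms(2) by (rule finite_subset_lessThan)
  show ?thesis using finite_subset_lessThan[OF assms(1)] assms
  proof (induction X rule: finite_induct)
    case (insert j X)
    have jn: "j < n" and jY: "j \<notin> Y" using insert by auto
    have "shuffle_sign (conj_pairs n (insert j X)) (conj_pairs n Y) =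
        shuffle_sign (conj_pair n j) (conj_pairs n Y) * shuffle_sign (conj_pairs n X) (conj_pairs n Y)"
      unfolding conj_pairs_insert using insert conj_pair_conj_pairs_disjoint[of X n j]
      by (intro shuffle_sign_Un_left) (auto simp: fY)
    also have "\<dots> = (-1) ^ card Y * (-1) ^ (card X * card Y)"
      using insert shuffle_sign_conj_pair_conj_pairs[OF fY assms(2) jn jY] by auto
    finally show ?case using insert by (simp add: power_add)
  qed simp
qed

lemma shuffle_sign_commute_conj_pairs:
  assumes "X \<subseteq> {..<n}" "finite Q" "conj_pairs n X \<inter> Q = {}"
  shows "shuffle_sign Q (conj_pairs n X) = shuffle_sign (conj_pairs n X) Q"
  using shuffle_sign_commute_even[of "conj_pairs n X" Q] assms finite_subset_lessThan[OF assms(1)]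
  by (simp add: card_conj_pairs)

section \<open>The Lefschetz operator and the powers of \<open>\<omega>\<close>\<close>

lemma omega_conj_pair: "j < n \<Longrightarrow> omega n (conj_pair n j) = \<i> / 2"
  by (auto simp: omega_def conj_pair_def)

lemma Lef_formula: "Lef n v R = (if R \<subseteq> letters n then
    (\<Sum>j | j < n \<and> conj_pair n j \<subseteq> R.
       (\<i>/2) * shuffle_sign (conj_pair n j) (R - conj_pair n j) * v (R - conj_pair n j)) else 0)"
proof (cases "R \<subseteq> letters n")
  case True
  let ?G = "{j. j < n \<and> conj_pair n j \<subseteq> R}"
  have fR: "finite R" by (rule finite_subset[OF True]) simp
  have omega_zero: "omega n S = 0" if "S \<notin> conj_pair n ` ?G" "S \<subseteq> R" for S
    using that by (auto simp: omega_def conj_pair_def)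
  have "(\<Sum>S\<in>Pow R. shuffle_sign S (R - S) * omega n S * v (R - S)) =
        (\<Sum>S\<in>conj_pair n ` ?G. shuffle_sign S (R - S) * omega n S * v (R - S))"
    by (rule sum.mono_neutral_right) (use fR omega_zero in auto)
  also have "\<dots> = (\<Sum>j\<in>?G. shuffle_sign (conj_pair n j) (R - conj_pair n j) *
      omega n (conj_pair n j) * v (R - conj_pair n j))"
    by (rule sum.reindex_cong[of "conj_pair n"]) (auto simp: inj_on_def conj_pair_inj)
  also have "\<dots> = (\<Sum>j\<in>?G. (\<i>/2) * shuffle_sign (conj_pair n j) (R - conj_pair n j) * v (R - conj_pair n j))"
    by (rule sum.cong) (auto simp: omega_conj_pair)
  finally show ?thesis using True by (simp add: Lef_def wedge_shuffle_sign)
qed (simp add: Lef_def wedge_shuffle_sign)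

definition omega_coeff :: "nat \<Rightarrow> complex" where
  "omega_coeff m = (\<i>/2) ^ m * (-1) ^ (m * (m - 1) div 2)"

lemma omega_coeff_Suc: "omega_coeff (Suc m) = (\<i>/2) * (-1) ^ m * omega_coeff m"
proof -
  have "Suc m * (Suc m - 1) div 2 = m * (m - 1) div 2 + m" by (cases m) (auto simp: algebra_simps)
  then show ?thesis by (simp add: omega_coeff_def power_add)
qed

lemma omega_coeff_add:
  "omega_coeff (m + q) = omega_coeff m * (\<i>/2) ^ q * (-1) ^ (m * q + q * (q - 1) div 2)"
proof (induction q)
  case (Suc q)
  have "Suc q * (Suc q - 1) div 2 = q * (q - 1) div 2 + q" by (cases q) (auto simp: algebra_simps)
  then have e: "m * Suc q + Suc q * (Suc q - 1) div 2 = (m * q + q * (q - 1) div 2) + (m + q)" by simp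
  have "omega_coeff (m + Suc q) = (\<i>/2) * (-1) ^ (m + q) * omega_coeff (m + q)"
    by (simp add: omega_coeff_Suc)
  also have "\<dots> = omega_coeff m * (\<i>/2) ^ Suc q * (-1) ^ (m * Suc q + Suc q * (Suc q - 1) div 2)"
    unfolding Suc e by (simp add: power_add)
  finally show ?case .
qed simp

lemma omega_coeff_add_double: "omega_coeff (m + 2 * d) * 4 ^ d = omega_coeff m"
proof (induction d)
  case (Suc d)
  have "omega_coeff (m + 2 * Suc d) = omega_coeff (Suc (Suc (m + 2 * d)))" by simp
  also have "\<dots> = (\<i>/2) * (-1) ^ Suc (m + 2*d) * ((\<i>/2) * (-1) ^ (m + 2*d) * omega_coeff (m + 2*d))"
    by (simp only: omega_coeff_Suc)
  also have "\<dots> = omega_coeff (m + 2*d) / 4"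
    by (simp add: power2_eq_square field_simps flip: power_add)
  finally show ?case using Suc.IH by (simp add: mult.assoc[symmetric])
qed simp

definition is_conj_pairs :: "nat \<Rightarrow> nat \<Rightarrow> nat set \<Rightarrow> bool" where
  "is_conj_pairs n m S \<longleftrightarrow> (\<exists>J. J \<subseteq> {..<n} \<and> card J = m \<and> S = conj_pairs n J)"

lemma is_conj_pairs_Diff_conj_pair:
  assumes "j < n" "conj_pair n j \<subseteq> S"
  shows "is_conj_pairs n m (S - conj_pair n j) \<longleftrightarrow> is_conj_pairs n (Suc m) S"
proof
  assume "is_conj_pairs n m (S - conj_pair n j)"
  then obtain J where J: "J \<subseteq> {..<n}" "card J = m" "S - conj_pair n j = conj_pairs n J"
    unfolding is_conj_pairs_def by blast
  have "j \<notin> J" using J(3) by (auto simp: conj_pair_def conj_pairs_def)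
  moreover have "S = conj_pairs n (insert j J)" using J(3) assms(2) by (auto simp: conj_pairs_insert)
  ultimately show "is_conj_pairs n (Suc m) S" unfolding is_conj_pairs_def
    using J assms(1) finite_subset_lessThan[OF J(1)] by (intro exI[of _ "insert j J"]) auto
next
  assume "is_conj_pairs n (Suc m) S"
  then obtain K where K: "K \<subseteq> {..<n}" "card K = Suc m" "S = conj_pairs n K"
    unfolding is_conj_pairs_def by blast
  then have "j \<in> K" using assms conj_pair_subset_conj_pairs by blast
  then show "is_conj_pairs n m (S - conj_pair n j)" unfolding is_conj_pairs_def
    using K assms(1) by (intro exI[of _ "K - {j}"]) (auto simp: conj_pairs_Diff_conj_pair)
qed

lemma Lef_funpow_bas_empty:
  assumes "m \<le> n"
  shows "(Lef n ^^ m) (bas {}) S = (if is_conj_pairs n m S then of_nat (fact m) * omega_coeff m else 0)"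
  using assms
proof (induction m arbitrary: S)
  case 0
  have "is_conj_pairs n 0 S \<longleftrightarrow> S = {}" unfolding is_conj_pairs_def
    by (auto dest: finite_subset_lessThan intro!: exI[of _ "{}"])
  then show ?case by (simp add: bas_def omega_coeff_def)
next
  case (Suc m)
  let ?G = "{j. j < n \<and> conj_pair n j \<subseteq> S}"
  let ?c = "of_nat (fact m) * omega_coeff m"
  have step: "(Lef n ^^ Suc m) (bas {}) S = (if S \<subseteq> letters n then
      (\<Sum>j\<in>?G. (\<i>/2) * shuffle_sign (conj_pair n j) (S - conj_pair n j) *
         (if is_conj_pairs n (Suc m) S then ?c else 0)) else 0)"
  proof -
    have IH: "(Lef n ^^ m) (bas {}) T = (if is_conj_pairs n m T then ?c else 0)" for T
      using Suc by simp
    have "(Lef n ^^ Suc m) (bas {}) S = (if S \<subseteq> letters n then (\<Sum>j\<in>?G. (\<i>/2) *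
        shuffle_sign (conj_pair n j) (S - conj_pair n j) * (Lef n ^^ m) (bas {}) (S - conj_pair n j)) else 0)"
      by (simp add: Lef_formula)
    then show ?thesis by (simp add: IH is_conj_pairs_Diff_conj_pair cong: sum.cong_simp)
  qed
  show ?case
  proof (cases "is_conj_pairs n (Suc m) S")
    case True
    then obtain K where K: "K \<subseteq> {..<n}" "card K = Suc m" "S = conj_pairs n K"
      unfolding is_conj_pairs_def by blast
    have "?G = K" using K conj_pair_subset_conj_pairs[OF K(1)] by auto
    moreover have "shuffle_sign (conj_pair n j) (S - conj_pair n j) = (-1) ^ m" if "j \<in> K" for j
    proof -
      have "j < n" using K(1) that by auto
      then show ?thesis using K that finite_subset_lessThan[OF K(1)]
        by (simp add: conj_pairs_Diff_conj_pair)
          (subst shuffle_sign_conj_pair_conj_pairs, auto)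
    qed
    ultimately have "(Lef n ^^ Suc m) (bas {}) S = of_nat (Suc m) * ((\<i>/2) * (-1) ^ m * ?c)"
      using step True K conj_pairs_subset_letters[OF K(1)] by simp
    then show ?thesis using True by (simp add: omega_coeff_Suc algebra_simps)
  qed (use step in simp)
qed

lemma omega_pow_eq:
  assumes "m \<le> n"
  shows "omega_pow n (int m) S = (if is_conj_pairs n m S then omega_coeff m else 0)"
  using assms by (simp add: omega_pow_def scale_def Lef_funpow_bas_empty)

lemma omega_pow_top: "omega_pow n (int n) R = (if R = letters n then omega_coeff n else 0)"
proof -
  have "is_conj_pairs n n R \<longleftrightarrow> R = letters n"
  proof
    assume "is_conj_pairs n n R"
    then obtain J where J: "J \<subseteq> {..<n}" "card J = n" "R = conj_pairs n J"
      unfolding is_conj_pairs_def by blast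
    then have "J = {..<n}" by (metis card_lessThan card_subset_eq finite_lessThan)
    then show "R = letters n" using J conj_pairs_lessThan by simp
  qed (auto simp: is_conj_pairs_def conj_pairs_lessThan intro!: exI[of _ "{..<n}"])
  then show ?thesis using omega_pow_eq[of n n R] by simp
qed

lemma omega_pow_nonzero_conj_pairs:
  assumes "omega_pow n z R \<noteq> 0"
  shows "\<exists>J. J \<subseteq> {..<n} \<and> R = conj_pairs n J \<and> z = int (card J) \<and> card J \<le> n"
proof -
  have "0 \<le> z" "z \<le> int n" using assms by (auto simp: omega_pow_def split: if_splits)
  then obtain m where m: "z = int m" "m \<le> n" by (metis nonneg_int_cases of_nat_le_iff)
  then have "is_conj_pairs n m R" using assms omega_pow_eq[of m n R] by (auto split: if_splits)
  then show ?thesis unfolding is_conj_pairs_def using m by blast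
qed

lemma omega_pow_nonzero_card:
  assumes "omega_pow n z R \<noteq> 0"
  shows "0 \<le> z \<and> z \<le> int n \<and> card R = 2 * nat z \<and> R \<subseteq> letters n"
  using omega_pow_nonzero_conj_pairs[OF assms] card_conj_pairs conj_pairs_subset_letters by force

section \<open>The adjoint \<open>\<Lambda>\<close> and its powers\<close>

text \<open>The coefficient of (Lambda u) at T collects the coefficients of u at T \<union> {j, n+j} for the
  pairs disjoint from T; the factor -2i is conj (i/2) times the norm ratio
  |e_(T \<union> {j, n+j})|^2 / |e_T|^2 = 4.\<close>

definition free_idx :: "nat \<Rightarrow> nat set \<Rightarrow> nat set" where
  "free_idx n T = {j. j < n \<and> conj_pair n j \<inter> T = {}}"

definition Lam_explicit :: "nat \<Rightarrow> form \<Rightarrow> form" where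
  "Lam_explicit n u T = (if T \<subseteq> letters n then
     (\<Sum>j\<in>free_idx n T. (-2*\<i>) * shuffle_sign (conj_pair n j) T * u (T \<union> conj_pair n j)) else 0)"

lemma finite_free_idx[simp]: "finite (free_idx n T)"
  by (simp add: free_idx_def)

lemma free_idx_subset: "free_idx n T \<subseteq> {..<n}"
  by (auto simp: free_idx_def)

lemma free_idx_Un_conj_pair: "j \<in> free_idx n T \<Longrightarrow> free_idx n (T \<union> conj_pair n j) = free_idx n T - {j}"
  by (auto simp: free_idx_def conj_pair_def)

lemma conj_pairs_free_idx_disjoint: "J \<subseteq> free_idx n T \<Longrightarrow> conj_pairs n J \<inter> T = {}"
  by (auto simp: free_idx_def conj_pairs_def conj_pair_def)

lemma Lam_explicit_adjoint: "form_inner n (Lam_explicit n u) v = form_inner n u (Lef n v)"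
proof -
  let ?A = "Sigma (Pow (letters n)) (free_idx n)"
  let ?B = "Sigma (Pow (letters n)) (\<lambda>R. {j. j < n \<and> conj_pair n j \<subseteq> R})"
  let ?f = "\<lambda>(R,j). 2 ^ card R * u R *
     ((-\<i>/2) * shuffle_sign (conj_pair n j) (R - conj_pair n j) * cnj (v (R - conj_pair n j)))"
  have "form_inner n (Lam_explicit n u) v = (\<Sum>(T,j)\<in>?A. 2 ^ card T *
      ((-2*\<i>) * shuffle_sign (conj_pair n j) T * u (T \<union> conj_pair n j)) * cnj (v T))"
    unfolding form_inner_def
    by (subst sum.Sigma[symmetric]) (auto intro!: sum.cong simp: Lam_explicit_def sum_distrib_left sum_distrib_right)
  also have "\<dots> = (\<Sum>x\<in>?B. ?f x)"
  proof (rule sum.reindex_bij_witness[where i = "\<lambda>(R,j). (R - conj_pair n j, j)"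
        and j = "\<lambda>(T,j). (T \<union> conj_pair n j, j)"])
    fix a assume "a \<in> ?A"
    then obtain T j where a: "a = (T,j)" "T \<subseteq> letters n" "j < n" "conj_pair n j \<inter> T = {}"
      by (auto simp: free_idx_def)
    have "card (T \<union> conj_pair n j) = card T + 2"
      using a finite_subset[OF a(2)] card_conj_pair[OF a(3)] by (simp add: card_Un_disjoint Int_commute)
    moreover have "T \<union> conj_pair n j - conj_pair n j = T" using a by auto
    ultimately show "?f ((\<lambda>(T,j). (T \<union> conj_pair n j, j)) a) = (case a of (T,j) \<Rightarrow> 2 ^ card T *
        ((-2*\<i>) * shuffle_sign (conj_pair n j) T * u (T \<union> conj_pair n j)) * cnj (v T))"
      using a by (simp add: power_add)
  qed (auto simp: free_idx_def conj_pair_def letters_def)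
  also have "\<dots> = form_inner n u (Lef n v)"
    unfolding form_inner_def
    by (subst sum.Sigma[symmetric]) (auto intro!: sum.cong simp: Lef_formula sum_distrib_left algebra_simps)
  finally show ?thesis .
qed

lemma form_inner_diff: "form_inner n (\<lambda>S. w S - z S) v = form_inner n w v - form_inner n z v"
  by (simp add: form_inner_def algebra_simps sum_subtractf)

lemma form_inner_self_eq_0:
  assumes "is_form n d" "form_inner n d d = 0"
  shows "d = (\<lambda>_. 0)"
proof
  fix S
  have e: "form_inner n d d = of_real (\<Sum>S\<in>Pow (letters n). 2 ^ card S * (cmod (d S))^2)"
    unfolding form_inner_def by (simp add: mult.assoc flip: complex_norm_square)
  have "(\<Sum>S\<in>Pow (letters n). 2 ^ card S * (cmod (d S))^2) = 0"
    using assms(2) e by (simp only: of_real_eq_0_iff)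
  then have "\<forall>S\<in>Pow (letters n). 2 ^ card S * (cmod (d S))^2 = 0"
    by (subst (asm) sum_nonneg_eq_0_iff) auto
  then show "d S = 0" using assms(1) unfolding is_form_def by (cases "S \<subseteq> letters n") auto
qed

lemma Lam_eq_Lam_explicit: "Lam n u = Lam_explicit n u"
  unfolding Lam_def
proof (rule the_equality)
  fix w assume w: "is_form n w \<and> (\<forall>v. is_form n v \<longrightarrow> form_inner n w v = form_inner n u (Lef n v))"
  let ?d = "\<lambda>S. w S - Lam_explicit n u S"
  have fd: "is_form n ?d" using w by (simp add: is_form_def Lam_explicit_def)
  have "form_inner n ?d ?d = 0"
    using w fd by (simp add: form_inner_diff Lam_explicit_adjoint)
  then have "?d = (\<lambda>_. 0)" using fd form_inner_self_eq_0 by blast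
  then show "w = Lam_explicit n u" by (simp add: fun_eq_iff)
qed (simp add: is_form_def Lam_explicit_def Lam_explicit_adjoint)

lemma sum_insert_subsets:
  fixes g :: "nat set \<Rightarrow> complex"
  assumes F: "finite F"
  shows "(\<Sum>j\<in>F. \<Sum>J\<in>{J. J \<subseteq> F - {j} \<and> card J = l}. g (insert j J)) =
         of_nat (Suc l) * (\<Sum>K\<in>{K. K \<subseteq> F \<and> card K = Suc l}. g K)"
proof -
  let ?A = "Sigma F (\<lambda>j. {J. J \<subseteq> F - {j} \<and> card J = l})"
  let ?B = "Sigma {K. K \<subseteq> F \<and> card K = Suc l} (\<lambda>K. K)"
  have "(\<Sum>j\<in>F. \<Sum>J\<in>{J. J \<subseteq> F - {j} \<and> card J = l}. g (insert j J)) = (\<Sum>(j,J)\<in>?A. g (insert j J))"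
    using F by (intro sum.Sigma) (auto intro: finite_subset)
  also have "\<dots> = (\<Sum>(K,j)\<in>?B. g K)"
  proof (rule sum.reindex_bij_witness[where i = "\<lambda>(K,j). (j, K - {j})" and j = "\<lambda>(j,J). (insert j J, j)"])
    fix a assume "a \<in> ?A"
    then obtain j J where a: "a = (j,J)" "j \<in> F" "J \<subseteq> F - {j}" "card J = l" by auto
    have "finite J" "j \<notin> J" using a F by (auto intro: finite_subset)
    then show "(\<lambda>(K,j). (j, K - {j})) ((\<lambda>(j,J). (insert j J, j)) a) = a"
      and "(\<lambda>(j,J). (insert j J, j)) a \<in> ?B"
      using a by auto
  next
    fix b assume "b \<in> ?B"
    then obtain K j where b: "b = (K,j)" "K \<subseteq> F" "card K = Suc l" "j \<in> K" by auto
    have "finite K" using b F finite_subset by blast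
    then show "(\<lambda>(j,J). (insert j J, j)) ((\<lambda>(K,j). (j, K - {j})) b) = b"
      and "(\<lambda>(K,j). (j, K - {j})) b \<in> ?A" using b by (auto simp: insert_absorb)
  qed auto
  also have "\<dots> = (\<Sum>K\<in>{K. K \<subseteq> F \<and> card K = Suc l}. of_nat (Suc l) * g K)"
    using F by (subst sum.Sigma[symmetric]) (auto intro: finite_subset)
  finally show ?thesis by (simp add: sum_distrib_left)
qed

definition free_subsets :: "nat \<Rightarrow> nat \<Rightarrow> nat set \<Rightarrow> nat set set" where
  "free_subsets n l T = {J. J \<subseteq> free_idx n T \<and> card J = l}"

lemma finite_free_subsets[simp]: "finite (free_subsets n l A)"
  unfolding free_subsets_def by (rule finite_subset[of _ "Pow (free_idx n A)"]) auto

definition Lam_coeff :: "nat \<Rightarrow> complex" where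
  "Lam_coeff l = (-2*\<i>) ^ l * (-1) ^ (l * (l - 1) div 2)"

lemma Lam_coeff_Suc: "Lam_coeff (Suc l) = (-2*\<i>) * (-1) ^ l * Lam_coeff l"
proof -
  have "Suc l * (Suc l - 1) div 2 = l * (l - 1) div 2 + l" by (cases l) (auto simp: algebra_simps)
  then show ?thesis by (simp add: Lam_coeff_def power_add)
qed

lemma Lam_coeff_square: "Lam_coeff l * Lam_coeff l = (-4) ^ l"
proof -
  have "Lam_coeff l * Lam_coeff l = ((-2*\<i>) * (-2*\<i>)) ^ l * ((-1) * (-1)) ^ (l * (l - 1) div 2)"
    unfolding Lam_coeff_def power_mult_distrib by (simp only: mult_ac)
  then show ?thesis by simp
qed

lemma shuffle_sign_insert_free_idx:
  assumes "finite T" "j \<in> free_idx n T" "J \<subseteq> free_idx n T - {j}"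
  shows "shuffle_sign (conj_pair n j) T * shuffle_sign (conj_pairs n J) (T \<union> conj_pair n j) =
    (-1) ^ card J * shuffle_sign (conj_pairs n (insert j J)) T"
proof -
  have jn: "j < n" and Jn: "J \<subseteq> {..<n}" using assms(2,3) free_idx_subset by blast+
  have fJ: "finite J" using Jn by (rule finite_subset_lessThan)
  have "shuffle_sign (conj_pairs n J) (T \<union> conj_pair n j) =
      shuffle_sign (conj_pairs n J) T * shuffle_sign (conj_pairs n J) (conj_pair n j)"
    using assms fJ by (intro shuffle_sign_Un_right) (auto simp: free_idx_def)
  moreover have "shuffle_sign (conj_pairs n (insert j J)) T =
      shuffle_sign (conj_pair n j) T * shuffle_sign (conj_pairs n J) T"
    unfolding conj_pairs_insert using conj_pair_conj_pairs_disjoint[OF Jn jn] assms fJ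
    by (intro shuffle_sign_Un_left) auto
  ultimately show ?thesis
    using shuffle_sign_conj_pairs_conj_pair[OF fJ Jn jn] assms(3) by auto
qed

lemma Lam_funpow_eq:
  assumes "is_form n u"
  shows "(Lam n ^^ l) u T = (if T \<subseteq> letters n then of_nat (fact l) * Lam_coeff l *
     (\<Sum>J\<in>free_subsets n l T. shuffle_sign (conj_pairs n J) T * u (T \<union> conj_pairs n J)) else 0)"
proof (induction l arbitrary: T)
  case 0
  have "free_subsets n 0 T = {{}}"
    by (auto simp: free_subsets_def dest: finite_subset[OF _ finite_free_idx])
  then show ?case using assms by (simp add: Lam_coeff_def Lam_eq_Lam_explicit Lam_explicit_def is_form_def)
next
  case (Suc l)
  show ?case
  proof (cases "T \<subseteq> letters n")
    case True
    let ?F = "free_idx n T"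
    let ?g = "\<lambda>K. shuffle_sign (conj_pairs n K) T * u (T \<union> conj_pairs n K)"
    let ?c = "(-2*\<i>) * of_nat (fact l) * Lam_coeff l"
    have IH: "(Lam n ^^ l) u (T \<union> conj_pair n j) = of_nat (fact l) * Lam_coeff l *
        (\<Sum>J | J \<subseteq> ?F - {j} \<and> card J = l.
          shuffle_sign (conj_pairs n J) (T \<union> conj_pair n j) * u (T \<union> conj_pair n j \<union> conj_pairs n J))"
      if "j \<in> ?F" for j
    proof -
      have "T \<union> conj_pair n j \<subseteq> letters n"
        using True that conj_pair_subset_letters by (auto simp: free_idx_def)
      then show ?thesis
        using Suc.IH[of "T \<union> conj_pair n j"] by (simp add: free_subsets_def free_idx_Un_conj_pair[OF that])
    qed
    have "(Lam n ^^ Suc l) u T = (\<Sum>j\<in>?F. (-2*\<i>) * shuffle_sign (conj_pair n j) T *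
        (of_nat (fact l) * Lam_coeff l * (\<Sum>J | J \<subseteq> ?F - {j} \<and> card J = l.
          shuffle_sign (conj_pairs n J) (T \<union> conj_pair n j) * u (T \<union> conj_pair n j \<union> conj_pairs n J))))"
      using True by (simp add: Lam_eq_Lam_explicit Lam_explicit_def IH cong: sum.cong_simp)
    also have "\<dots> = (\<Sum>j\<in>?F. \<Sum>J | J \<subseteq> ?F - {j} \<and> card J = l. ?c *
        (shuffle_sign (conj_pair n j) T * shuffle_sign (conj_pairs n J) (T \<union> conj_pair n j)) *
        u (T \<union> conj_pair n j \<union> conj_pairs n J))"
      by (simp add: sum_distrib_left mult_ac)
    also have "\<dots> = (\<Sum>j\<in>?F. \<Sum>J | J \<subseteq> ?F - {j} \<and> card J = l. ?c * (-1) ^ l * ?g (insert j J))"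
    proof (intro sum.cong refl)
      fix j J assume "j \<in> ?F" "J \<in> {J. J \<subseteq> ?F - {j} \<and> card J = l}"
      moreover have "T \<union> conj_pair n j \<union> conj_pairs n J = T \<union> conj_pairs n (insert j J)"
        by (auto simp: conj_pairs_insert)
      ultimately show "?c * (shuffle_sign (conj_pair n j) T * shuffle_sign (conj_pairs n J) (T \<union> conj_pair n j)) *
          u (T \<union> conj_pair n j \<union> conj_pairs n J) = ?c * (-1) ^ l * ?g (insert j J)"
        using shuffle_sign_insert_free_idx[OF finite_subset[OF True]] by simp
    qed
    also have "\<dots> = ?c * (-1) ^ l * (\<Sum>j\<in>?F. \<Sum>J | J \<subseteq> ?F - {j} \<and> card J = l. ?g (insert j J))"
      by (simp only: sum_distrib_left)
    also have "\<dots> = ?c * (-1) ^ l * (of_nat (Suc l) * (\<Sum>K | K \<subseteq> ?F \<and> card K = Suc l. ?g K))"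
      by (simp only: sum_insert_subsets[OF finite_free_idx, where g = ?g])
    finally show ?thesis using True by (simp add: free_subsets_def Lam_coeff_Suc algebra_simps)
  qed (simp add: Lam_eq_Lam_explicit Lam_explicit_def)
qed

lemma Lam_pow_eq:
  assumes "is_form n u"
  shows "Lam_pow n l u T = (if T \<subseteq> letters n then
     Lam_coeff l * (\<Sum>J\<in>free_subsets n l T. shuffle_sign (conj_pairs n J) T * u (T \<union> conj_pairs n J)) else 0)"
  by (simp add: Lam_pow_def scale_def Lam_funpow_eq[OF assms])

section \<open>The operator I and complex conjugation\<close>

definition hol_deg :: "nat \<Rightarrow> nat set \<Rightarrow> nat" where "hol_deg n S = card (S \<inter> {..<n})"

definition antihol_deg :: "nat \<Rightarrow> nat set \<Rightarrow> nat" where "antihol_deg n S = card (S \<inter> {n..<2*n})"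

lemma Iop_eq: "Iop n u S = (if S \<subseteq> letters n then \<i> powi (int (hol_deg n S) - int (antihol_deg n S)) * u S else 0)"
proof -
  have hb: "hol_deg n S \<le> 2*n" unfolding hol_deg_def
    by (rule order_trans[OF card_mono[of "{..<n}"]]) auto
  have ab: "antihol_deg n S \<le> 2*n" unfolding antihol_deg_def
    by (rule order_trans[OF card_mono[of "{n..<2*n}"]]) auto
  have e: "\<And>p q. proj_pq n p q u S = (if q = antihol_deg n S then (if p = hol_deg n S then (if S \<subseteq> letters n then u S else 0) else 0) else 0)"
    by (auto simp: proj_pq_def hol_deg_def antihol_deg_def)
  show ?thesis unfolding Iop_def e using hb ab
    by (simp add: if_distrib[where f = "\<lambda>x. _ * x"] sum.delta' cong: if_cong)
qed

definition swap_set :: "nat \<Rightarrow> nat set \<Rightarrow> nat set" where "swap_set n T = swp n ` T"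

lemma swp_swp: "a < 2*n \<Longrightarrow> swp n (swp n a) = a" by (auto simp: swp_def)

lemma swp_lt: "a < 2*n \<Longrightarrow> swp n a < 2*n" by (auto simp: swp_def)

lemma swap_set_subset_letters: "T \<subseteq> letters n \<Longrightarrow> swap_set n T \<subseteq> letters n"
  by (auto simp: swap_set_def letters_def swp_lt)

lemma swap_set_swap_set: "T \<subseteq> letters n \<Longrightarrow> swap_set n (swap_set n T) = T"
proof -
  assume T: "T \<subseteq> letters n"
  have "swap_set n (swap_set n T) = (\<lambda>a. swp n (swp n a)) ` T" by (simp add: swap_set_def image_image)
  also have "\<dots> = (\<lambda>a. a) ` T" using T by (intro image_cong) (auto simp: letters_def swp_swp)
  also have "\<dots> = T" by simp
  finally show ?thesis .
qed

lemma inj_on_swp: "inj_on (swp n) (letters n)"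
  by (rule inj_on_inverseI[where g = "swp n"]) (auto simp: letters_def swp_swp)

lemma card_swap_set: "T \<subseteq> letters n \<Longrightarrow> card (swap_set n T) = card T"
  unfolding swap_set_def by (rule card_image) (rule inj_on_subset[OF inj_on_swp])

lemma card_fconj_inversions:
  assumes "S \<subseteq> letters n"
  shows "card {(s,t). s \<in> S \<and> t \<in> S \<and> s < t \<and> swp n t < swp n s} = hol_deg n S * antihol_deg n S"
proof -
  have "{(s,t). s \<in> S \<and> t \<in> S \<and> s < t \<and> swp n t < swp n s} = (S \<inter> {..<n}) \<times> (S \<inter> {n..<2*n})"
    using assms by (auto simp: swp_def letters_def)
  then show ?thesis by (simp add: hol_deg_def antihol_deg_def card_cartesian_product)
qed

lemma fconj_eq: "fconj n w T = (if T \<subseteq> letters n then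
     (-1) ^ (hol_deg n (swap_set n T) * antihol_deg n (swap_set n T)) * cnj (w (swap_set n T)) else 0)"
  using card_fconj_inversions[OF swap_set_subset_letters] by (simp add: fconj_def swap_set_def Let_def)

definition conj_I_coeff :: "nat \<Rightarrow> nat set \<Rightarrow> complex" where
  "conj_I_coeff n S = (-1) ^ (hol_deg n S * antihol_deg n S) * cnj (\<i> powi (int (hol_deg n S) - int (antihol_deg n S)))"

lemma fconj_Iop_eq: "fconj n (Iop n u) T = (if T \<subseteq> letters n then conj_I_coeff n (swap_set n T) * cnj (u (swap_set n T)) else 0)"
  by (simp add: fconj_eq Iop_eq swap_set_subset_letters conj_I_coeff_def)

lemma is_kform_fconj_Iop: "is_kform n k u \<Longrightarrow> is_kform n k (fconj n (Iop n u))"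
  unfolding is_kform_def is_form_def
  by (auto simp: fconj_Iop_eq card_swap_set)

section \<open>The counting identity behind the sequence \<open>b\<close>\<close>

lemma sum_Pow_minus_one_power:
  "finite F \<Longrightarrow> (\<Sum>Z\<in>Pow F. (-1::int) ^ card Z) = (if F = {} then 1 else 0)"
  using prod_diff_conv_sum[of F "\<lambda>_. 1::int" "\<lambda>_. 1"] by (auto simp: power_0_left card_eq_0_iff)

lemma disjoint_Diff_inclusion_exclusion:
  assumes "finite A1" "J1 \<subseteq> A1" "J2 \<subseteq> A2"
  shows "(if (A1 - J1) \<inter> (A2 - J2) = {} then 1 else 0) = (\<Sum>Z\<in>Pow (A1 \<inter> A2).
    (-1::int) ^ card Z * (if Z \<inter> J1 = {} then 1 else 0) * (if Z \<inter> J2 = {} then 1 else 0))"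
proof -
  have fP: "finite (Pow (A1 \<inter> A2))" using assms(1) by (simp del: Pow_Int_eq)
  have "(\<Sum>Z\<in>Pow (A1 \<inter> A2). (-1::int) ^ card Z *
        (if Z \<inter> J1 = {} then 1 else 0) * (if Z \<inter> J2 = {} then 1 else 0)) =
      (\<Sum>Z\<in>Pow (A1 \<inter> A2 - J1 - J2). (-1) ^ card Z)"
    by (rule sum.mono_neutral_cong_right) (use fP in \<open>auto simp del: Pow_Int_eq\<close>)
  also have "\<dots> = (if A1 \<inter> A2 - J1 - J2 = {} then 1 else 0)"
    using assms(1) by (intro sum_Pow_minus_one_power) auto
  moreover have "(A1 - J1) \<inter> (A2 - J2) = A1 \<inter> A2 - J1 - J2" by auto
  ultimately show ?thesis by simp
qed

lemma card_subsets_avoiding: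
  assumes "finite A" "Z \<subseteq> A"
  shows "(\<Sum>J | J \<subseteq> A \<and> card J = l. if Z \<inter> J = {} then 1 else 0::int) = int ((card A - card Z) choose l)"
proof -
  have "(\<Sum>J | J \<subseteq> A \<and> card J = l. if Z \<inter> J = {} then 1 else 0::int) =
      int (card {J. J \<subseteq> A - Z \<and> card J = l})"
    by (subst sum.If_cases) (use assms in \<open>auto intro!: arg_cong[where f = card] simp: finite_subset\<close>)
  also have "\<dots> = int ((card A - card Z) choose l)"
    using assms by (simp add: n_subsets card_Diff_subset finite_subset)
  finally show ?thesis .
qed

lemma count_disjoint_complements:
  assumes "finite A1" "finite A2" "card A1 = a" "card A2 = a"
  shows "(\<Sum>J1 | J1 \<subseteq> A1 \<and> card J1 = l. \<Sum>J2 | J2 \<subseteq> A2 \<and> card J2 = l.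
            if (A1 - J1) \<inter> (A2 - J2) = {} then 1 else 0) =
      (\<Sum>Z\<in>Pow (A1 \<inter> A2). (-1) ^ card Z * int ((a - card Z) choose l) ^ 2)"
proof -
  let ?avoid = "\<lambda>Z J. if Z \<inter> J = {} then 1 else 0::int"
  have "(\<Sum>J1 | J1 \<subseteq> A1 \<and> card J1 = l. \<Sum>J2 | J2 \<subseteq> A2 \<and> card J2 = l.
            if (A1 - J1) \<inter> (A2 - J2) = {} then 1 else 0) =
      (\<Sum>J1 | J1 \<subseteq> A1 \<and> card J1 = l. \<Sum>J2 | J2 \<subseteq> A2 \<and> card J2 = l.
         \<Sum>Z\<in>Pow (A1 \<inter> A2). (-1) ^ card Z * ?avoid Z J1 * ?avoid Z J2)"
    using assms(1) by (intro sum.cong refl) (auto simp: disjoint_Diff_inclusion_exclusion)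
  also have "\<dots> = (\<Sum>J1 | J1 \<subseteq> A1 \<and> card J1 = l. \<Sum>Z\<in>Pow (A1 \<inter> A2).
      \<Sum>J2 | J2 \<subseteq> A2 \<and> card J2 = l. (-1) ^ card Z * ?avoid Z J1 * ?avoid Z J2)"
    by (rule sum.cong[OF refl], rule sum.swap)
  also have "\<dots> = (\<Sum>Z\<in>Pow (A1 \<inter> A2). \<Sum>J1 | J1 \<subseteq> A1 \<and> card J1 = l.
      \<Sum>J2 | J2 \<subseteq> A2 \<and> card J2 = l. (-1) ^ card Z * ?avoid Z J1 * ?avoid Z J2)"
    by (rule sum.swap)
  also have "\<dots> = (\<Sum>Z\<in>Pow (A1 \<inter> A2). (-1) ^ card Z *
      (\<Sum>J1 | J1 \<subseteq> A1 \<and> card J1 = l. ?avoid Z J1) * (\<Sum>J2 | J2 \<subseteq> A2 \<and> card J2 = l. ?avoid Z J2))"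
    by (rule sum.cong[OF refl]) (simp only: mult.assoc sum_product, simp only: sum_distrib_left mult.assoc)
  also have "\<dots> = (\<Sum>Z\<in>Pow (A1 \<inter> A2). (-1) ^ card Z * int ((a - card Z) choose l) ^ 2)"
    using assms by (intro sum.cong refl) (auto simp: card_subsets_avoiding power2_eq_square)
  finally show ?thesis .
qed

lemma sum_b_binomial_square:
  fixes b :: "nat \<Rightarrow> int"
  assumes "b 0 = 1" and "\<forall>p\<ge>1. (\<Sum>l=0..p. (-1) ^ l * int (p choose l) ^ 2 * b l) = 0"
    and "p \<le> n"
  shows "(\<Sum>l=0..n. (-1) ^ l * b l * int (p choose l) ^ 2) = (if p = 0 then 1 else 0)"
proof -
  have "(\<Sum>l=0..n. (-1) ^ l * b l * int (p choose l) ^ 2) = (\<Sum>l=0..p. (-1) ^ l * int (p choose l) ^ 2 * b l)"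
    by (rule sum.mono_neutral_cong_right) (use assms(3) in auto)
  then show ?thesis using assms(1,2) by (cases "p = 0") auto
qed

lemma sum_b_disjoint_complements:
  fixes b :: "nat \<Rightarrow> int"
  assumes b0: "b 0 = 1" and brec: "\<forall>p\<ge>1. (\<Sum>l=0..p. (-1) ^ l * int (p choose l) ^ 2 * b l) = 0"
    and f1: "finite A1" and f2: "finite A2" and c1: "card A1 = a" and c2: "card A2 = a" and an: "a \<le> n"
  shows "(\<Sum>l=0..n. (-1) ^ l * b l * (\<Sum>J1 | J1 \<subseteq> A1 \<and> card J1 = l. \<Sum>J2 | J2 \<subseteq> A2 \<and> card J2 = l.
            if (A1 - J1) \<inter> (A2 - J2) = {} then 1 else 0)) = (if A1 = A2 then (-1) ^ a else 0)"
proof -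
  let ?I = "A1 \<inter> A2"
  have fI: "finite ?I" using f1 by simp
  have "(\<Sum>l=0..n. (-1) ^ l * b l * (\<Sum>J1 | J1 \<subseteq> A1 \<and> card J1 = l. \<Sum>J2 | J2 \<subseteq> A2 \<and> card J2 = l.
            if (A1 - J1) \<inter> (A2 - J2) = {} then 1 else 0))
     = (\<Sum>Z\<in>Pow ?I. (-1) ^ card Z * (\<Sum>l=0..n. (-1) ^ l * b l * int ((a - card Z) choose l) ^ 2))"
    unfolding count_disjoint_complements[OF f1 f2 c1 c2]
    by (simp add: sum_distrib_left algebra_simps) (rule sum.swap)
  also have "\<dots> = (\<Sum>Z\<in>Pow ?I. if card Z = a then (-1) ^ a else 0)"
  proof (rule sum.cong[OF refl])
    fix Z assume "Z \<in> Pow ?I"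
    then have "card Z \<le> a" using c1 f1 by (metis Int_lower1 PowD card_mono order.trans)
    then show "(-1) ^ card Z * (\<Sum>l=0..n. (-1) ^ l * b l * int ((a - card Z) choose l) ^ 2) =
        (if card Z = a then (-1) ^ a else 0)"
      using sum_b_binomial_square[OF b0 brec, of "a - card Z" n] an by auto
  qed
  also have "\<dots> = (-1) ^ a * int (card {Z. Z \<subseteq> ?I \<and> card Z = a})"
    using fI by (subst sum.If_cases) (auto simp del: Pow_Int_eq Int_subset_iff intro!: arg_cong[where f = card])
  also have "\<dots> = (-1) ^ a * int (card ?I choose a)"
    using n_subsets[OF fI, of a] by (simp del: Int_subset_iff)
  also have "\<dots> = (if A1 = A2 then (-1) ^ a else 0)"
  proof -
    have "card ?I \<le> a" using c1 f1 by (metis Int_lower1 card_mono)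
    moreover have "card ?I = a \<longleftrightarrow> A1 = A2"
    proof
      assume "card ?I = a"
      then have "?I = A1" using f1 c1 by (metis Int_lower1 card_subset_eq)
      then show "A1 = A2" using f2 c1 c2 by (metis Int_lower2 card_subset_eq)
    qed (use c1 in auto)
    ultimately show ?thesis by (auto simp: binomial_eq_0)
  qed
  finally show ?thesis .
qed

section \<open>Paired and unpaired letters\<close>

definition paired_idx :: "nat \<Rightarrow> nat set \<Rightarrow> nat set" where
  "paired_idx n S = {j. j < n \<and> j \<in> S \<and> n + j \<in> S}"

definition unpaired :: "nat \<Rightarrow> nat set \<Rightarrow> nat set" where
  "unpaired n S = S - conj_pairs n (paired_idx n S)"

definition idx_of :: "nat \<Rightarrow> nat set \<Rightarrow> nat set" where
  "idx_of n Q = {j. j < n \<and> (j \<in> Q \<or> n + j \<in> Q)}"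

lemma paired_idx_subset: "paired_idx n S \<subseteq> {..<n}" by (auto simp: paired_idx_def)

lemma idx_of_subset: "idx_of n Q \<subseteq> {..<n}" by (auto simp: idx_of_def)

lemma swp_mem_conj_pairs: "J \<subseteq> {..<n} \<Longrightarrow> x < 2*n \<Longrightarrow> swp n x \<in> conj_pairs n J \<longleftrightarrow> x \<in> conj_pairs n J"
  by (auto simp: mem_conj_pairs swp_def)

lemma mem_swap_set: "T \<subseteq> letters n \<Longrightarrow> x < 2*n \<Longrightarrow> x \<in> swap_set n T \<longleftrightarrow> swp n x \<in> T"
  unfolding swap_set_def letters_def
  by (metis (no_types, lifting) imageE image_eqI lessThan_iff subsetD swp_lt swp_swp)

lemma mem_conj_pairs_paired_idx: "x < 2*n \<Longrightarrow> x \<in> conj_pairs n (paired_idx n S) \<longleftrightarrow> x \<in> S \<and> swp n x \<in> S"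
  unfolding mem_conj_pairs[OF paired_idx_subset] by (auto simp: paired_idx_def swp_def add.commute)

lemma mem_unpaired: "S \<subseteq> letters n \<Longrightarrow> x \<in> unpaired n S \<longleftrightarrow> x \<in> S \<and> swp n x \<notin> S"
  unfolding unpaired_def letters_def using mem_conj_pairs_paired_idx[of x n S] by auto

lemma conj_pairs_paired_idx_subset: "conj_pairs n (paired_idx n S) \<subseteq> S"
  by (auto simp: conj_pairs_def paired_idx_def)

lemma conj_pairs_Un_unpaired: "S \<subseteq> letters n \<Longrightarrow> S = conj_pairs n (paired_idx n S) \<union> unpaired n S"
  unfolding unpaired_def using conj_pairs_paired_idx_subset[of n S] by blast

lemma unpaired_subset: "unpaired n S \<subseteq> S" by (auto simp: unpaired_def)

lemma idx_of_unpaired_disjoint: "S \<subseteq> letters n \<Longrightarrow> idx_of n (unpaired n S) \<inter> paired_idx n S = {}"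
  by (auto simp: idx_of_def mem_unpaired paired_idx_def swp_def letters_def add.commute)

lemma unpaired_swap_set_disjoint: "S \<subseteq> letters n \<Longrightarrow> unpaired n S \<inter> swap_set n (unpaired n S) = {}"
proof -
  assume S: "S \<subseteq> letters n"
  have Q: "unpaired n S \<subseteq> letters n" using S unpaired_subset by blast
  show ?thesis
  proof (rule ccontr)
    assume "unpaired n S \<inter> swap_set n (unpaired n S) \<noteq> {}"
    then obtain x where x: "x \<in> unpaired n S" "x \<in> swap_set n (unpaired n S)" by blast
    have xl: "x < 2*n" using x(1) Q by (auto simp: letters_def)
    have "swp n x \<in> unpaired n S" using x(2) mem_swap_set[OF Q xl] by simp
    then have "swp n x \<in> S" using unpaired_subset by blast
    then show False using x(1) mem_unpaired[OF S] by blast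
  qed
qed

lemma unpaired_Un_swap_set: "S \<subseteq> letters n \<Longrightarrow> unpaired n S \<union> swap_set n (unpaired n S) = conj_pairs n (idx_of n (unpaired n S))"
proof -
  assume S: "S \<subseteq> letters n"
  have Q: "unpaired n S \<subseteq> letters n" using S unpaired_subset by blast
  show ?thesis
  proof (rule set_eqI)
    fix x
    show "x \<in> unpaired n S \<union> swap_set n (unpaired n S) \<longleftrightarrow> x \<in> conj_pairs n (idx_of n (unpaired n S))"
    proof (cases "x < 2*n")
      case True
      then show ?thesis
        unfolding mem_conj_pairs[OF idx_of_subset] using mem_swap_set[OF Q True] by (auto simp: idx_of_def swp_def add.commute)
    next
      case False
      then show ?thesis using Q conj_pairs_subset_letters[OF idx_of_subset, of n "unpaired n S"] swap_set_subset_letters[OF Q]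
        by (auto simp: letters_def)
    qed
  qed
qed

lemma card_idx_of_unpaired: "S \<subseteq> letters n \<Longrightarrow> card (idx_of n (unpaired n S)) = card (unpaired n S)"
proof -
  assume S: "S \<subseteq> letters n"
  have Q: "unpaired n S \<subseteq> letters n" using S unpaired_subset by blast
  have fQ: "finite (unpaired n S)" using Q by (rule finite_subset) simp
  have "2 * card (idx_of n (unpaired n S)) = card (conj_pairs n (idx_of n (unpaired n S)))" by (simp add: card_conj_pairs idx_of_subset)
  also have "\<dots> = card (unpaired n S) + card (swap_set n (unpaired n S))"
    by (simp add: unpaired_Un_swap_set[OF S, symmetric] card_Un_disjoint fQ swap_set_def unpaired_swap_set_disjoint[OF S, unfolded swap_set_def])
  also have "\<dots> = 2 * card (unpaired n S)" using card_swap_set[OF Q] by simp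
  finally show ?thesis by simp
qed

lemma card_unpaired_paired_idx: "S \<subseteq> letters n \<Longrightarrow> card S = card (unpaired n S) + 2 * card (paired_idx n S)"
proof -
  assume S: "S \<subseteq> letters n"
  have fS: "finite S" using S by (rule finite_subset) simp
  have "card S = card (conj_pairs n (paired_idx n S)) + card (unpaired n S)"
    using conj_pairs_Un_unpaired[OF S] fS card_Un_disjoint[of "conj_pairs n (paired_idx n S)" "unpaired n S"]
    by (metis Diff_disjoint finite_Un unpaired_def)
  then show ?thesis by (simp add: card_conj_pairs paired_idx_subset)
qed

lemma swap_set_conj_pairs: "J \<subseteq> {..<n} \<Longrightarrow> swap_set n (conj_pairs n J) = conj_pairs n J"
proof -
  assume J: "J \<subseteq> {..<n}"
  have P: "conj_pairs n J \<subseteq> letters n" using conj_pairs_subset_letters[OF J] .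
  show ?thesis
  proof (rule set_eqI)
    fix x show "x \<in> swap_set n (conj_pairs n J) \<longleftrightarrow> x \<in> conj_pairs n J"
      using mem_swap_set[OF P, of x] swp_mem_conj_pairs[OF J, of x] P swap_set_subset_letters[OF P]
      by (cases "x < 2*n") (auto simp: letters_def)
  qed
qed

lemma swap_set_Un: "swap_set n (X \<union> Y) = swap_set n X \<union> swap_set n Y" by (auto simp: swap_set_def)

lemma paired_idx_swap_set: "S \<subseteq> letters n \<Longrightarrow> paired_idx n (swap_set n S) = paired_idx n S"
  unfolding paired_idx_def using mem_swap_set[of S n] by (auto simp: swp_def letters_def add.commute)

lemma swap_set_Diff:
  "X \<subseteq> letters n \<Longrightarrow> Y \<subseteq> letters n \<Longrightarrow> swap_set n (X - Y) = swap_set n X - swap_set n Y"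
  unfolding swap_set_def by (rule inj_on_image_set_diff[OF inj_on_swp]) auto

lemma Diff_conj_pairs_paired:
  assumes "S \<subseteq> letters n" "J \<subseteq> paired_idx n S"
  shows "S - conj_pairs n J = conj_pairs n (paired_idx n S - J) \<union> unpaired n S"
  using conj_pairs_Diff[OF paired_idx_subset, of J n S] assms(2) paired_idx_subset[of n S]
    conj_pairs_mono[OF assms(2), of n] conj_pairs_paired_idx_subset[of n S]
  unfolding unpaired_def by blast

lemma swap_set_Diff_conj_pairs_paired:
  assumes "S \<subseteq> letters n" "J \<subseteq> paired_idx n S"
  shows "swap_set n S - conj_pairs n J = conj_pairs n (paired_idx n S - J) \<union> swap_set n (unpaired n S)"
proof -
  have Jn: "J \<subseteq> {..<n}" using assms(2) paired_idx_subset by blast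
  have "swap_set n S - conj_pairs n J = swap_set n (S - conj_pairs n J)"
    using assms(1) swap_set_Diff[OF assms(1) conj_pairs_subset_letters[OF Jn]] swap_set_conj_pairs[OF Jn] by simp
  also have "\<dots> = conj_pairs n (paired_idx n S - J) \<union> swap_set n (unpaired n S)"
    unfolding Diff_conj_pairs_paired[OF assms] swap_set_Un
    using swap_set_conj_pairs[of "paired_idx n S - J" n] paired_idx_subset[of n S] by auto
  finally show ?thesis .
qed

lemma unpaired_eq_Diff_swap_set:
  assumes "S \<subseteq> letters n" "J \<subseteq> paired_idx n S"
  shows "unpaired n S = (S - conj_pairs n J) - swap_set n (S - conj_pairs n J)"
proof -
  have Jn: "J \<subseteq> {..<n}" using assms(2) paired_idx_subset by blast
  have PJ: "conj_pairs n J \<subseteq> S" using conj_pairs_mono[OF assms(2)] conj_pairs_paired_idx_subset by blast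
  have "x \<in> unpaired n S \<longleftrightarrow> x \<in> (S - conj_pairs n J) - swap_set n (S - conj_pairs n J)" for x
  proof (cases "x < 2*n")
    case True
    have "S - conj_pairs n J \<subseteq> letters n" using assms(1) by blast
    then have "x \<in> swap_set n (S - conj_pairs n J) \<longleftrightarrow> swp n x \<in> S \<and> x \<notin> conj_pairs n J"
      using mem_swap_set[OF _ True] swp_mem_conj_pairs[OF Jn True] by simp
    moreover have "x \<in> conj_pairs n J \<Longrightarrow> swp n x \<in> S"
      using PJ swp_mem_conj_pairs[OF Jn True] by blast
    ultimately show ?thesis using mem_unpaired[OF assms(1), of x] by auto
  qed (use assms(1) unpaired_subset in \<open>auto simp: letters_def\<close>)
  then show ?thesis by blast
qed

lemma Diff_swap_set_complement:
  assumes "A \<subseteq> letters n" "B \<subseteq> letters n" "A \<inter> B = {}"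
    and closed: "\<And>x. x \<in> A \<union> B \<Longrightarrow> swp n x \<in> A \<union> B"
  shows "A - swap_set n A = swap_set n B - B"
proof (rule set_eqI)
  fix x
  show "x \<in> A - swap_set n A \<longleftrightarrow> x \<in> swap_set n B - B"
  proof (cases "x < 2*n")
    case True
    have "swp n x \<in> A \<union> B \<Longrightarrow> x \<in> A \<union> B" using closed[of "swp n x"] swp_swp[OF True] by simp
    then show ?thesis
      using assms(3) mem_swap_set[OF assms(1) True] mem_swap_set[OF assms(2) True] closed[of x] by blast
  qed (use assms(1) swap_set_subset_letters[OF assms(1)] swap_set_subset_letters[OF assms(2)]
      in \<open>auto simp: letters_def\<close>)
qed

lemma unpaired_eq_if_complement:
  assumes S1: "S1 \<subseteq> letters n" and S2: "S2 \<subseteq> letters n"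
    and J1: "J1 \<subseteq> paired_idx n S1" and J2: "J2 \<subseteq> paired_idx n S2"
    and AB: "(S1 - conj_pairs n J1) \<inter> (swap_set n S2 - conj_pairs n J2) = {}"
    and J3: "J3 \<subseteq> {..<n}"
      "letters n - ((S1 - conj_pairs n J1) \<union> (swap_set n S2 - conj_pairs n J2)) = conj_pairs n J3"
  shows "unpaired n S1 = unpaired n S2"
proof -
  let ?A = "S1 - conj_pairs n J1" and ?B' = "S2 - conj_pairs n J2"
  have B'L: "?B' \<subseteq> letters n" using S2 by blast
  have J2n: "J2 \<subseteq> {..<n}" using J2 paired_idx_subset by blast
  have B: "swap_set n S2 - conj_pairs n J2 = swap_set n ?B'"
    using swap_set_Diff[OF S2 conj_pairs_subset_letters[OF J2n]] swap_set_conj_pairs[OF J2n] by simp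
  have BL: "swap_set n ?B' \<subseteq> letters n" using swap_set_subset_letters[OF B'L] .
  have "?A \<union> swap_set n ?B' = letters n - conj_pairs n J3"
    using J3(2) S1 BL B by blast
  then have closed: "swp n x \<in> ?A \<union> swap_set n ?B'" if "x \<in> ?A \<union> swap_set n ?B'" for x
    using that swp_mem_conj_pairs[OF J3(1), of x] swp_lt[of x n] by (auto simp: letters_def)
  have "unpaired n S1 = ?A - swap_set n ?A" by (rule unpaired_eq_Diff_swap_set[OF S1 J1])
  also have "\<dots> = swap_set n (swap_set n ?B') - swap_set n ?B'"
    using S1 BL AB B closed by (intro Diff_swap_set_complement) auto
  also have "\<dots> = unpaired n S2"
    using unpaired_eq_Diff_swap_set[OF S2 J2] swap_set_swap_set[OF B'L] by simp
  finally show ?thesis .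
qed

section \<open>The contribution of a pair of index sets\<close>

lemma shuffle_sign_conj_pairs_split:
  assumes "X \<subseteq> {..<n}" "I \<subseteq> {..<n}" "X \<inter> I = {}" "Q \<inter> Q' = {}" "Q \<union> Q' = conj_pairs n I"
  shows "shuffle_sign (conj_pairs n X) Q * shuffle_sign (conj_pairs n X) Q' = (-1) ^ (card X * card I)"
proof -
  have fQ: "finite Q" "finite Q'" using assms(5) finite_subset_lessThan[OF assms(2)]
    by (metis finite_Un finite_conj_pairs)+
  have "shuffle_sign (conj_pairs n X) Q * shuffle_sign (conj_pairs n X) Q' = shuffle_sign (conj_pairs n X) (Q \<union> Q')"
    using fQ assms(4) finite_subset_lessThan[OF assms(1)] by (simp add: shuffle_sign_Un_right)
  also have "\<dots> = (-1) ^ (card X * card I)" unfolding assms(5) by (rule shuffle_sign_conj_pairs[OF assms(1-3)])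
  finally show ?thesis .
qed

lemma shuffle_sign_conj_pairs_swap_part:
  assumes "X \<subseteq> {..<n}" "I \<subseteq> {..<n}" "X \<inter> I = {}" "Q \<inter> Q' = {}" "Q \<union> Q' = conj_pairs n I"
  shows "shuffle_sign (conj_pairs n X) Q = shuffle_sign (conj_pairs n X) Q' * (-1) ^ (card X * card I)"
proof -
  have h: "shuffle_sign (conj_pairs n X) Q * shuffle_sign (conj_pairs n X) Q' = (-1) ^ (card X * card I)" using shuffle_sign_conj_pairs_split[OF assms] .
  have "shuffle_sign (conj_pairs n X) Q = shuffle_sign (conj_pairs n X) Q * (shuffle_sign (conj_pairs n X) Q' * shuffle_sign (conj_pairs n X) Q')" using shuffle_sign_square[of "conj_pairs n X" Q'] by simp
  also have "\<dots> = (shuffle_sign (conj_pairs n X) Q * shuffle_sign (conj_pairs n X) Q') * shuffle_sign (conj_pairs n X) Q'" by (simp only: mult.assoc)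
  finally show ?thesis unfolding h by simp
qed

lemma pair_term_sign:
  assumes sub: "X1 \<subseteq> {..<n}" "X2 \<subseteq> {..<n}" "J1 \<subseteq> {..<n}" "J2 \<subseteq> {..<n}" "J3 \<subseteq> {..<n}" "I \<subseteq> {..<n}"
    and disj: "X1 \<inter> J1 = {}" "X2 \<inter> J2 = {}" "X1 \<inter> X2 = {}" "J3 \<inter> X1 = {}" "J3 \<inter> X2 = {}"
      "X1 \<inter> I = {}" "X2 \<inter> I = {}" "J1 \<inter> I = {}" "J2 \<inter> I = {}" "J3 \<inter> I = {}"
    and QQ: "Q \<inter> Q' = {}" "Q \<union> Q' = conj_pairs n I"
    and cards: "card X1 = d" "card X2 = d" "card J1 = l" "card J2 = l" "card I = q" "card J3 + 2 * d + q = n"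
  shows "shuffle_sign (conj_pairs n X1 \<union> Q) (conj_pairs n X2 \<union> Q') * shuffle_sign (conj_pairs n X1 \<union> Q \<union> (conj_pairs n X2 \<union> Q')) (conj_pairs n J3) *
         shuffle_sign (conj_pairs n J1) (conj_pairs n X1 \<union> Q) * shuffle_sign (conj_pairs n J2) (conj_pairs n X2 \<union> Q')
       = (-1) ^ d * (shuffle_sign (conj_pairs n (X1 \<union> J1)) Q' * shuffle_sign (conj_pairs n (X2 \<union> J2)) Q * shuffle_sign Q Q' * (-1) ^ ((n - q) * q))"
proof -
  have fQ: "finite Q" "finite Q'" using QQ(2) finite_subset_lessThan[OF sub(6)] by (metis finite_Un finite_conj_pairs)+
  have fin: "finite (conj_pairs n X1)" "finite (conj_pairs n X2)" "finite (conj_pairs n J1)" "finite (conj_pairs n J2)" "finite (conj_pairs n J3)"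
    using sub by (auto dest: finite_subset_lessThan)
  have QI: "Q \<subseteq> conj_pairs n I" "Q' \<subseteq> conj_pairs n I" using QQ(2) by auto
  have dQ: "\<And>X. X \<subseteq> {..<n} \<Longrightarrow> X \<inter> I = {} \<Longrightarrow> conj_pairs n X \<inter> Q = {} \<and> conj_pairs n X \<inter> Q' = {}"
    using QI conj_pairs_disjoint[OF _ sub(6)] by blast
  have d1: "conj_pairs n X1 \<inter> Q = {}" "conj_pairs n X1 \<inter> Q' = {}" using dQ[OF sub(1) disj(6)] by auto
  have d2: "conj_pairs n X2 \<inter> Q = {}" "conj_pairs n X2 \<inter> Q' = {}" using dQ[OF sub(2) disj(7)] by auto
  have d3: "conj_pairs n J3 \<inter> Q = {}" "conj_pairs n J3 \<inter> Q' = {}" using dQ[OF sub(5)] disj(10) by (auto simp: Int_commute)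
  have dJ1: "conj_pairs n J1 \<inter> Q = {}" "conj_pairs n J1 \<inter> Q' = {}" using dQ[OF sub(3) disj(8)] by auto
  have dJ2: "conj_pairs n J2 \<inter> Q = {}" "conj_pairs n J2 \<inter> Q' = {}" using dQ[OF sub(4) disj(9)] by auto
  have p12: "conj_pairs n X1 \<inter> conj_pairs n X2 = {}" using conj_pairs_disjoint[OF sub(1,2) disj(3)] .
  have p13: "conj_pairs n X1 \<inter> conj_pairs n J3 = {}" using conj_pairs_disjoint[OF sub(1,5)] disj(4) by (auto simp: Int_commute)
  have p23: "conj_pairs n X2 \<inter> conj_pairs n J3 = {}" using conj_pairs_disjoint[OF sub(2,5)] disj(5) by (auto simp: Int_commute)
  have p11: "conj_pairs n J1 \<inter> conj_pairs n X1 = {}" using conj_pairs_disjoint[OF sub(3,1)] disj(1) by (auto simp: Int_commute)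
  have p22: "conj_pairs n J2 \<inter> conj_pairs n X2 = {}" using conj_pairs_disjoint[OF sub(4,2)] disj(2) by (auto simp: Int_commute)
  have e1: "shuffle_sign (conj_pairs n X1 \<union> Q) (conj_pairs n X2 \<union> Q') =
      shuffle_sign (conj_pairs n X1) (conj_pairs n X2) * shuffle_sign (conj_pairs n X1) Q' * (shuffle_sign Q (conj_pairs n X2) * shuffle_sign Q Q')"
    using fQ fin d1 d2 p12 QQ(1)
    by (simp add: shuffle_sign_Un_left shuffle_sign_Un_right Int_Un_distrib Int_Un_distrib2 Int_commute)
  have e2: "shuffle_sign (conj_pairs n X1 \<union> Q \<union> (conj_pairs n X2 \<union> Q')) (conj_pairs n J3) =
      shuffle_sign (conj_pairs n X1) (conj_pairs n J3) * shuffle_sign Q (conj_pairs n J3) * (shuffle_sign (conj_pairs n X2) (conj_pairs n J3) * shuffle_sign Q' (conj_pairs n J3))"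
    using fQ fin d1 d2 p12 QQ(1)
    by (simp add: shuffle_sign_Un_left Int_Un_distrib Int_Un_distrib2 Int_commute)
  have e3: "shuffle_sign (conj_pairs n J1) (conj_pairs n X1 \<union> Q) = shuffle_sign (conj_pairs n J1) (conj_pairs n X1) * shuffle_sign (conj_pairs n J1) Q"
    using fQ fin d1 by (simp add: shuffle_sign_Un_right)
  have e4: "shuffle_sign (conj_pairs n J2) (conj_pairs n X2 \<union> Q') = shuffle_sign (conj_pairs n J2) (conj_pairs n X2) * shuffle_sign (conj_pairs n J2) Q'"
    using fQ fin d2 by (simp add: shuffle_sign_Un_right)
  have v1: "shuffle_sign (conj_pairs n X1) (conj_pairs n X2) = (-1) ^ (d * d)" using shuffle_sign_conj_pairs[OF sub(1,2) disj(3)] cards by simp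
  have v2: "shuffle_sign (conj_pairs n X1) (conj_pairs n J3) = (-1) ^ (d * card J3)" using shuffle_sign_conj_pairs[OF sub(1,5)] disj(4) cards by (simp add: Int_commute)
  have v3: "shuffle_sign (conj_pairs n X2) (conj_pairs n J3) = (-1) ^ (d * card J3)" using shuffle_sign_conj_pairs[OF sub(2,5)] disj(5) cards by (simp add: Int_commute)
  have v4: "shuffle_sign (conj_pairs n J1) (conj_pairs n X1) = (-1) ^ (l * d)" using shuffle_sign_conj_pairs[OF sub(3,1)] disj(1) cards by (simp add: Int_commute)
  have v5: "shuffle_sign (conj_pairs n J2) (conj_pairs n X2) = (-1) ^ (l * d)" using shuffle_sign_conj_pairs[OF sub(4,2)] disj(2) cards by (simp add: Int_commute)
  have v6: "shuffle_sign Q (conj_pairs n J3) * shuffle_sign Q' (conj_pairs n J3) = (-1) ^ (card J3 * q)"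
    using shuffle_sign_commute_conj_pairs[OF sub(5) fQ(1) d3(1)] shuffle_sign_commute_conj_pairs[OF sub(5) fQ(2) d3(2)]
      shuffle_sign_conj_pairs_split[OF sub(5,6) disj(10) QQ] cards by simp
  have v7: "shuffle_sign Q (conj_pairs n X2) = shuffle_sign (conj_pairs n X2) Q" using shuffle_sign_commute_conj_pairs[OF sub(2) fQ(1) d2(1)] .
  have v8: "shuffle_sign (conj_pairs n J1) Q = shuffle_sign (conj_pairs n J1) Q' * (-1) ^ (l * q)"
    using shuffle_sign_conj_pairs_swap_part[OF sub(3,6) disj(8) QQ] cards by simp
  have v9: "shuffle_sign (conj_pairs n J2) Q' = shuffle_sign (conj_pairs n J2) Q * (-1) ^ (l * q)"
    using shuffle_sign_conj_pairs_swap_part[OF sub(4,6) disj(9), of Q' Q] QQ cards by (simp add: Int_commute Un_commute)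
  have w1: "shuffle_sign (conj_pairs n (X1 \<union> J1)) Q' = shuffle_sign (conj_pairs n X1) Q' * shuffle_sign (conj_pairs n J1) Q'"
    unfolding conj_pairs_Un using fQ fin disj(1) conj_pairs_disjoint[OF sub(1,3) disj(1)] by (simp add: shuffle_sign_Un_left)
  have w2: "shuffle_sign (conj_pairs n (X2 \<union> J2)) Q = shuffle_sign (conj_pairs n X2) Q * shuffle_sign (conj_pairs n J2) Q"
    unfolding conj_pairs_Un using fQ fin disj(2) conj_pairs_disjoint[OF sub(2,4) disj(2)] by (simp add: shuffle_sign_Un_left)
  have par: "(-1::complex) ^ (d * d) * (-1) ^ (d * card J3) * (-1) ^ (d * card J3) * (-1) ^ (card J3 * q) *
      (-1) ^ (l * d) * (-1) ^ (l * q) * (-1) ^ (l * d) * (-1) ^ (l * q) = (-1) ^ d * (-1) ^ ((n - q) * q)"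
  proof -
    have "n - q = card J3 + 2 * d" using cards(6) by simp
    then have "(-1::complex) ^ (d * d + d * card J3 + d * card J3 + card J3 * q + l * d + l * q + l * d + l * q) =
        (-1) ^ (d + (n - q) * q)"
      by (intro minus_one_power_eq_if_even) (simp add: algebra_simps)
    then show ?thesis by (simp add: power_add)
  qed
  show ?thesis
    unfolding e1 e2 e3 e4 v1 v2 v3 v4 v5 v7 v8 w1 w2 v9 
    using v6 par by (simp add: algebra_simps)
qed

text \<open>The contribution of u_S1 conj (u_S2) to the top coefficient of
  Lambda^[l] u \<and> Lambda^[l] conj (I u) \<and> omega^[n-k+2l] in which Lambda^[l] removes the pairs J1
  from S1 and J2 from the conjugate index set of S2, apart from the factors Lam_coeff and
  conj_I_coeff.\<close>

definition pair_term :: "nat \<Rightarrow> nat \<Rightarrow> nat \<Rightarrow> nat set \<Rightarrow> nat set \<Rightarrow> nat set \<Rightarrow> nat set \<Rightarrow> complex" where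
  "pair_term n k l S1 S2 J1 J2 = (let A = S1 - conj_pairs n J1; B = swap_set n S2 - conj_pairs n J2 in
     if A \<inter> B = {} then shuffle_sign A B * shuffle_sign (A \<union> B) (letters n - (A \<union> B)) *
       shuffle_sign (conj_pairs n J1) A * shuffle_sign (conj_pairs n J2) B *
       omega_pow n (int n - int k + 2 * int l) (letters n - (A \<union> B))
     else 0)"

definition pair_sign :: "nat \<Rightarrow> nat set \<Rightarrow> nat set \<Rightarrow> complex" where
  "pair_sign n S1 S2 =
     shuffle_sign (conj_pairs n (paired_idx n S1)) (swap_set n (unpaired n S1)) *
     shuffle_sign (conj_pairs n (paired_idx n S2)) (unpaired n S1) *
     shuffle_sign (unpaired n S1) (swap_set n (unpaired n S1)) *
     (-1) ^ ((n - card (unpaired n S1)) * card (unpaired n S1))"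

lemma letters_Diff_conj_pairs:
  assumes "X \<subseteq> {..<n}"
  shows "letters n - conj_pairs n X = conj_pairs n ({..<n} - X)"
  using conj_pairs_Diff[OF order_refl assms] by (simp add: conj_pairs_lessThan)

lemma conj_pairs_disjoint_unpaired:
  assumes "S \<subseteq> letters n" "X \<subseteq> paired_idx n S"
  shows "conj_pairs n X \<inter> unpaired n S = {} \<and> conj_pairs n X \<inter> swap_set n (unpaired n S) = {}"
proof -
  have "X \<inter> idx_of n (unpaired n S) = {}" using idx_of_unpaired_disjoint[OF assms(1)] assms(2) by blast
  then have "conj_pairs n X \<inter> conj_pairs n (idx_of n (unpaired n S)) = {}"
    using assms(2) paired_idx_subset by (intro conj_pairs_disjoint idx_of_subset) blast+
  then show ?thesis unfolding unpaired_Un_swap_set[OF assms(1), symmetric] by blast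
qed

lemma unpaired_Un_disjoint_iff:
  assumes S1: "S1 \<subseteq> letters n" and S2: "S2 \<subseteq> letters n" and Q: "unpaired n S1 = unpaired n S2"
    and X1: "X1 \<subseteq> paired_idx n S1" and X2: "X2 \<subseteq> paired_idx n S2"
  shows "(conj_pairs n X1 \<union> unpaired n S1) \<inter> (conj_pairs n X2 \<union> swap_set n (unpaired n S1)) = {}
    \<longleftrightarrow> X1 \<inter> X2 = {}"
proof
  assume "X1 \<inter> X2 = {}"
  then have "conj_pairs n X1 \<inter> conj_pairs n X2 = {}"
    using X1 X2 paired_idx_subset by (intro conj_pairs_disjoint) blast+
  moreover have "conj_pairs n X1 \<inter> swap_set n (unpaired n S1) = {}" "conj_pairs n X2 \<inter> unpaired n S1 = {}"
    using conj_pairs_disjoint_unpaired[OF S1 X1] conj_pairs_disjoint_unpaired[OF S2 X2] Q by simp_all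
  ultimately show "(conj_pairs n X1 \<union> unpaired n S1) \<inter> (conj_pairs n X2 \<union> swap_set n (unpaired n S1)) = {}"
    using unpaired_swap_set_disjoint[OF S1] by blast
qed (auto simp: conj_pairs_def)

lemma omega_pow_complement:
  assumes "X \<subseteq> {..<n}" "card X = 2 * d + q"
  shows "card ({..<n} - X) + 2 * d + q = n"
    and "omega_pow n (int (card ({..<n} - X))) (conj_pairs n ({..<n} - X)) = omega_coeff (n - q) * 4 ^ d"
proof -
  have "card X \<le> n" using card_mono[OF finite_lessThan assms(1)] by simp
  then show c: "card ({..<n} - X) + 2 * d + q = n"
    using assms by (simp add: card_Diff_subset finite_subset_lessThan)
  have om: "omega_pow n (int (card ({..<n} - X))) (conj_pairs n ({..<n} - X)) = omega_coeff (card ({..<n} - X))"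
    using c by (subst omega_pow_eq) (auto simp: is_conj_pairs_def)
  have "n - q = card ({..<n} - X) + 2 * d" using c by simp
  then show "omega_pow n (int (card ({..<n} - X))) (conj_pairs n ({..<n} - X)) = omega_coeff (n - q) * 4 ^ d"
    using om omega_coeff_add_double[of "card ({..<n} - X)" d] by simp
qed

lemma pair_term_eq:
  assumes S1: "S1 \<subseteq> letters n" and S2: "S2 \<subseteq> letters n" and QQ: "unpaired n S1 = unpaired n S2"
    and c1: "card S1 = k" and c2: "card S2 = k"
    and J1: "J1 \<subseteq> paired_idx n S1" "card J1 = l" and J2: "J2 \<subseteq> paired_idx n S2" "card J2 = l"
  shows "pair_term n k l S1 S2 J1 J2 = (if (paired_idx n S1 - J1) \<inter> (paired_idx n S2 - J2) = {} then
     (-1) ^ (card (paired_idx n S1) - l) * 4 ^ (card (paired_idx n S1) - l) * pair_sign n S1 S2 *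
       omega_coeff (n - card (unpaired n S1)) else 0)"
proof -
  define Q where "Q = unpaired n S1"
  define X1 where "X1 = paired_idx n S1 - J1"
  define X2 where "X2 = paired_idx n S2 - J2"
  define I where "I = idx_of n Q"
  define a where "a = card (paired_idx n S1)"
  have In: "I \<subseteq> {..<n}" unfolding I_def by (rule idx_of_subset)
  have X1n: "X1 \<subseteq> {..<n}" and X2n: "X2 \<subseteq> {..<n}"
    unfolding X1_def X2_def using paired_idx_subset[of n] by blast+
  have QQ': "Q \<inter> swap_set n Q = {}" "Q \<union> swap_set n Q = conj_pairs n I"
    using unpaired_swap_set_disjoint[OF S1] unpaired_Un_swap_set[OF S1] unfolding Q_def I_def by auto
  have XI: "X1 \<inter> I = {}" "X2 \<inter> I = {}"
    using idx_of_unpaired_disjoint[OF S1] idx_of_unpaired_disjoint[OF S2]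
    unfolding I_def Q_def X1_def X2_def QQ by blast+
  have cI: "card I = card Q" using card_idx_of_unpaired[OF S1] unfolding I_def Q_def .
  have ca: "card (paired_idx n S2) = a"
    using card_unpaired_paired_idx[OF S1] card_unpaired_paired_idx[OF S2] c1 c2 QQ unfolding a_def by simp
  have fA: "finite (paired_idx n S1)" "finite (paired_idx n S2)"
    using finite_subset_lessThan[OF paired_idx_subset] by blast+
  have cX: "card X1 = a - l" "card X2 = a - l"
    unfolding X1_def X2_def using J1 J2 fA ca a_def by (simp_all add: card_Diff_subset finite_subset)
  have J1n: "J1 \<subseteq> {..<n}" and J2n: "J2 \<subseteq> {..<n}" using J1 J2 paired_idx_subset by blast+
  have la: "l \<le> a" using card_mono[OF fA(1) J1(1)] J1(2) unfolding a_def by simp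
  have A: "S1 - conj_pairs n J1 = conj_pairs n X1 \<union> Q"
    using Diff_conj_pairs_paired[OF S1 J1(1)] unfolding X1_def Q_def .
  have B: "swap_set n S2 - conj_pairs n J2 = conj_pairs n X2 \<union> swap_set n Q"
    using swap_set_Diff_conj_pairs_paired[OF S2 J2(1)] QQ unfolding X2_def Q_def by simp
  have disj_iff: "(conj_pairs n X1 \<union> Q) \<inter> (conj_pairs n X2 \<union> swap_set n Q) = {} \<longleftrightarrow> X1 \<inter> X2 = {}"
    unfolding X1_def X2_def Q_def by (rule unpaired_Un_disjoint_iff[OF S1 S2 QQ]) blast+
  show ?thesis
  proof (cases "X1 \<inter> X2 = {}")
    case True
    define J3 where "J3 = {..<n} - (X1 \<union> X2 \<union> I)"
    have compl: "letters n - (conj_pairs n X1 \<union> Q \<union> (conj_pairs n X2 \<union> swap_set n Q)) = conj_pairs n J3"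
    proof -
      have "conj_pairs n X1 \<union> Q \<union> (conj_pairs n X2 \<union> swap_set n Q) = conj_pairs n (X1 \<union> X2 \<union> I)"
        using QQ'(2) unfolding conj_pairs_Un by blast
      then show ?thesis unfolding J3_def using letters_Diff_conj_pairs[of "X1 \<union> X2 \<union> I" n] X1n X2n In by simp
    qed
    have cU: "card (X1 \<union> X2 \<union> I) = (a - l) + (a - l) + card Q"
      using True XI cX cI finite_subset_lessThan[OF X1n] finite_subset_lessThan[OF X2n]
        finite_subset_lessThan[OF In] by (simp add: card_Un_disjoint Int_Un_distrib2)
    have cn: "card J3 + 2 * (a - l) + card Q = n"
      and om: "omega_pow n (int (card J3)) (conj_pairs n J3) = omega_coeff (n - card Q) * 4 ^ (a - l)"
      using omega_pow_complement[of "X1 \<union> X2 \<union> I" n "a - l" "card Q"] X1n X2n In cU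
      unfolding J3_def by simp_all
    have "k = card Q + 2 * a" using card_unpaired_paired_idx[OF S1] c1 unfolding Q_def a_def by simp
    then have eint: "int n - int k + 2 * int l = int (card J3)" using cn la by simp
    have "X1 \<union> J1 = paired_idx n S1" "X2 \<union> J2 = paired_idx n S2" using J1 J2 unfolding X1_def X2_def by auto
    moreover have "shuffle_sign (conj_pairs n X1 \<union> Q) (conj_pairs n X2 \<union> swap_set n Q) *
        shuffle_sign (conj_pairs n X1 \<union> Q \<union> (conj_pairs n X2 \<union> swap_set n Q)) (conj_pairs n J3) *
        shuffle_sign (conj_pairs n J1) (conj_pairs n X1 \<union> Q) * shuffle_sign (conj_pairs n J2) (conj_pairs n X2 \<union> swap_set n Q)
      = (-1) ^ (a - l) * (shuffle_sign (conj_pairs n (X1 \<union> J1)) (swap_set n Q) *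
        shuffle_sign (conj_pairs n (X2 \<union> J2)) Q * shuffle_sign Q (swap_set n Q) * (-1) ^ ((n - card Q) * card Q))"
      using cn True XI QQ' cX cI J1 J2 paired_idx_subset[of n] idx_of_unpaired_disjoint[OF S1]
        idx_of_unpaired_disjoint[OF S2] QQ
      by (intro pair_term_sign[OF X1n X2n J1n J2n _ In]) (auto simp: X1_def X2_def J3_def I_def Q_def)
    ultimately show ?thesis
      unfolding pair_term_def Let_def A B compl eint om using True disj_iff cn
      by (simp add: pair_sign_def X1_def X2_def Q_def a_def)
  next
    case False
    then have "(S1 - conj_pairs n J1) \<inter> (swap_set n S2 - conj_pairs n J2) \<noteq> {}"
      unfolding A B disj_iff .
    with False show ?thesis unfolding pair_term_def Let_def X1_def X2_def by simp
  qed
qed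

lemma pair_term_eq_0:
  assumes S1: "S1 \<subseteq> letters n" and S2: "S2 \<subseteq> letters n" and ne: "unpaired n S1 \<noteq> unpaired n S2"
    and J1: "J1 \<subseteq> paired_idx n S1" and J2: "J2 \<subseteq> paired_idx n S2"
  shows "pair_term n k l S1 S2 J1 J2 = 0"
proof (rule ccontr)
  assume h: "pair_term n k l S1 S2 J1 J2 \<noteq> 0"
  let ?A = "S1 - conj_pairs n J1" and ?B = "swap_set n S2 - conj_pairs n J2"
  have AB: "?A \<inter> ?B = {}" and om: "omega_pow n (int n - int k + 2 * int l) (letters n - (?A \<union> ?B)) \<noteq> 0"
    using h unfolding pair_term_def Let_def by (auto split: if_splits)
  obtain J3 where J3: "J3 \<subseteq> {..<n}" "letters n - (?A \<union> ?B) = conj_pairs n J3" using omega_pow_nonzero_conj_pairs[OF om] by blast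
  have "unpaired n S1 = unpaired n S2" using unpaired_eq_if_complement[OF S1 S2 J1 J2 AB J3] .
  then show False using ne by simp
qed

section \<open>The diagonal terms\<close>

lemma hol_deg_Un:
  "finite X \<Longrightarrow> finite Y \<Longrightarrow> X \<inter> Y = {} \<Longrightarrow> hol_deg n (X \<union> Y) = hol_deg n X + hol_deg n Y"
  unfolding hol_deg_def Int_Un_distrib2 by (rule card_Un_disjoint) auto

lemma antihol_deg_Un:
  "finite X \<Longrightarrow> finite Y \<Longrightarrow> X \<inter> Y = {} \<Longrightarrow> antihol_deg n (X \<union> Y) = antihol_deg n X + antihol_deg n Y"
  unfolding antihol_deg_def Int_Un_distrib2 by (rule card_Un_disjoint) auto

lemma hol_deg_conj_pairs: "A \<subseteq> {..<n} \<Longrightarrow> hol_deg n (conj_pairs n A) = card A"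
proof -
  assume "A \<subseteq> {..<n}"
  then have "conj_pairs n A \<inter> {..<n} = A" by (auto simp: conj_pairs_def)
  then show ?thesis unfolding hol_deg_def by simp
qed

lemma antihol_deg_conj_pairs: "A \<subseteq> {..<n} \<Longrightarrow> antihol_deg n (conj_pairs n A) = card A"
proof -
  assume "A \<subseteq> {..<n}"
  then have "conj_pairs n A \<inter> {n..<2*n} = (\<lambda>j. n + j) ` A" by (auto simp: conj_pairs_def)
  then show ?thesis unfolding antihol_deg_def by (simp add: card_image)
qed

lemma hol_deg_add_antihol_deg: "Q \<subseteq> letters n \<Longrightarrow> hol_deg n Q + antihol_deg n Q = card Q"
proof -
  assume Q: "Q \<subseteq> letters n"
  then have "Q = Q \<inter> {..<n} \<union> Q \<inter> {n..<2*n}" by (auto simp: letters_def)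
  then have "card Q = card (Q \<inter> {..<n} \<union> Q \<inter> {n..<2*n})" by (rule arg_cong)
  also have "\<dots> = card (Q \<inter> {..<n}) + card (Q \<inter> {n..<2*n})"
    by (rule card_Un_disjoint) (use finite_subset[OF Q] in auto)
  finally show ?thesis unfolding hol_deg_def antihol_deg_def by simp
qed

text \<open>Writing Q = H \<union> T with H holomorphic and T antiholomorphic, the conjugate set is
  (H + n) \<union> (T - n); the inversions come from T \<times> (T - n) and, in total, from the two
  interleavings of H with T - n.\<close>

lemma inversions_swap_set_self:
  assumes QL: "Q \<subseteq> letters n" and QQ': "Q \<inter> swap_set n Q = {}"
  shows "inversions Q (swap_set n Q) = hol_deg n Q * antihol_deg n Q + antihol_deg n Q * antihol_deg n Q"
proof -
  define H where "H = Q \<inter> {..<n}"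
  define T where "T = Q \<inter> {n..<2*n}"
  define T0 where "T0 = (\<lambda>x. x - n) ` T"
  let ?H' = "(\<lambda>x. x + n) ` H"
  have fin: "finite H" "finite T" "finite T0" "finite ?H'"
    using finite_subset[OF QL] by (auto simp: H_def T_def T0_def)
  have QHT: "Q = H \<union> T" using QL by (auto simp: H_def T_def letters_def)
  have T_eq: "T = (\<lambda>x. x + n) ` T0" unfolding T0_def image_image by (auto simp: T_def image_iff)
  have cT0: "card T0 = antihol_deg n Q"
    unfolding T0_def antihol_deg_def T_def by (rule card_image) (auto simp: inj_on_def)
  have T0n: "x \<in> T0 \<Longrightarrow> x < n" for x by (auto simp: T0_def T_def)
  have swQ: "swap_set n Q = ?H' \<union> T0"
    unfolding swap_set_def QHT T0_def by (auto simp: H_def T_def swp_def image_Un add.commute intro!: image_cong)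
  have HT0: "H \<inter> T0 = {}"
  proof -
    have "x + n \<notin> T" if "x \<in> H" for x
      using that QQ' unfolding swQ by (auto simp: H_def T_def)
    then show ?thesis unfolding T_eq by blast
  qed
  have "H \<inter> T = {}" "?H' \<inter> T0 = {}" using T0n by (auto simp: H_def T_def)
  then have "inversions (H \<union> T) (?H' \<union> T0) =
      inversions H ?H' + inversions H T0 + (inversions T ?H' + inversions T T0)"
    using fin by (simp add: inversions_Un_left inversions_Un_right)
  then have "inversions Q (swap_set n Q) =
      inversions H ?H' + inversions H T0 + (inversions T ?H' + inversions T T0)"
    using QHT swQ by simp
  also have "inversions H ?H' = 0" by (rule inversions_none) (auto simp: H_def)
  also have "inversions T ?H' = inversions T0 H" unfolding T_eq by (rule inversions_shift)
  also have "inversions T T0 = card T * card T0"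
    by (rule inversions_all[OF fin(2,3)]) (auto simp: T_def dest!: T0n)
  also have "\<dots> = antihol_deg n Q * antihol_deg n Q" using cT0 by (simp add: T_def antihol_deg_def)
  finally have "inversions Q (swap_set n Q) =
      0 + inversions H T0 + (inversions T0 H + antihol_deg n Q * antihol_deg n Q)" .
  moreover have "inversions H T0 + inversions T0 H = hol_deg n Q * antihol_deg n Q"
    using inversions_swap[OF fin(1,3) HT0] cT0 by (simp add: hol_deg_def H_def)
  ultimately show ?thesis by simp
qed

lemma pair_sign_diagonal:
  assumes S: "S \<subseteq> letters n"
  defines "Q \<equiv> unpaired n S"
  shows "pair_sign n S S = (-1) ^ (card (paired_idx n S) * card Q) *
    (-1) ^ (hol_deg n Q * antihol_deg n Q + antihol_deg n Q * antihol_deg n Q) * (-1) ^ ((n - card Q) * card Q)"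
proof -
  have QL: "Q \<subseteq> letters n" using S unpaired_subset unfolding Q_def by blast
  have "shuffle_sign (conj_pairs n (paired_idx n S)) (swap_set n Q) *
      shuffle_sign (conj_pairs n (paired_idx n S)) Q = (-1) ^ (card (paired_idx n S) * card Q)"
    using shuffle_sign_conj_pairs_split[OF paired_idx_subset idx_of_subset _ unpaired_swap_set_disjoint[OF S]
        unpaired_Un_swap_set[OF S]] idx_of_unpaired_disjoint[OF S] card_idx_of_unpaired[OF S]
    unfolding Q_def by (simp add: Int_commute mult.commute)
  moreover have "shuffle_sign Q (swap_set n Q) =
      (-1) ^ (hol_deg n Q * antihol_deg n Q + antihol_deg n Q * antihol_deg n Q)"
    using inversions_swap_set_self[OF QL] unpaired_swap_set_disjoint[OF S]
    unfolding shuffle_sign_def Q_def by simp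
  ultimately show ?thesis unfolding pair_sign_def Q_def[symmetric] by simp
qed

lemma imaginary_unit_powi_diff: "\<i> powi (int h - int t) = \<i> ^ h * (-\<i>) ^ t"
proof -
  have "\<i> powi (int h - int t) = \<i> ^ h / \<i> ^ t" by (simp add: power_int_diff)
  also have "\<dots> = \<i> ^ h * (-\<i>) ^ t" by (simp add: divide_inverse power_inverse[symmetric])
  finally show ?thesis .
qed

text \<open>The constant of a diagonal term: a counts the pairs, h and t the unpaired holomorphic and
  antiholomorphic letters, and m = n - (h + t).\<close>

lemma diagonal_constant_arith:
  fixes a h t m :: nat
  defines "q \<equiv> h + t" and "k \<equiv> h + t + 2 * a"
  shows "(-1) ^ ((a + h) * (a + t)) * ((-\<i>) ^ h * \<i> ^ t) *
      ((-4) ^ a * ((-1) ^ (a * q) * (-1) ^ (h * t + t * t) * (-1) ^ (m * q)) * omega_coeff m * (-1) ^ a)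
    = (-1) ^ (k * (k + 1) div 2) * 2 ^ k * omega_coeff (m + q)"
proof -
  define D where "D = q * (q - 1) div 2"
  have kdiv: "k * (k + 1) div 2 = D + q + a * (2 * q + 1) + 2 * a * a"
  proof -
    have "q * (q + 1) div 2 = D + q" unfolding D_def by (cases q) (auto simp: algebra_simps)
    moreover have "k * (k + 1) = q * (q + 1) + 2 * (a * (2 * q + 1) + 2 * a * a)"
      unfolding k_def q_def by (simp add: algebra_simps)
    ultimately show ?thesis by simp
  qed
  have parity: "(-1::complex) ^ ((a + h) * (a + t) + h + a + a * q + (h * t + t * t) + m * q + a) =
       (-1) ^ (D + q + a * (2 * q + 1) + 2 * a * a + (m * q + D))"
  proof (rule minus_one_power_eq_if_even)
    have eqn: "(a + h) * (a + t) + h + a + a * q + (h * t + t * t) + m * q + a +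
        (D + q + a * (2 * q + 1) + 2 * a * a + (m * q + D))
      = (a * a + a) + (t * t + t) + 2 * (a * a + a + 2 * a * t + 2 * a * h + h * t + h + m * q + D)"
      unfolding q_def by (simp add: algebra_simps)
    have "even (a * a + a)" "even (t * t + t)" by auto
    then show "even ((a + h) * (a + t) + h + a + a * q + (h * t + t * t) + m * q + a +
        (D + q + a * (2 * q + 1) + 2 * a * a + (m * q + D)))" unfolding eqn by simp
  qed
  have i2: "(\<i>/2) ^ q * 2 ^ q = \<i> ^ h * \<i> ^ t"
    unfolding q_def power_mult_distrib[symmetric] by (simp add: power_add)
  have "(-\<i>::complex) ^ h = (-1) ^ h * \<i> ^ h" "(-4::complex) ^ a = (-1) ^ a * 4 ^ a"
    unfolding power_mult_distrib[symmetric] by simp_all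
  then have "(-1) ^ ((a + h) * (a + t)) * ((-\<i>) ^ h * \<i> ^ t) *
      ((-4) ^ a * ((-1) ^ (a * q) * (-1) ^ (h * t + t * t) * (-1) ^ (m * q)) * omega_coeff m * (-1) ^ a) =
      (-1) ^ ((a + h) * (a + t) + h + a + a * q + (h * t + t * t) + m * q + a) *
      (\<i> ^ h * \<i> ^ t * 4 ^ a * omega_coeff m)"
    by (simp only: power_add mult_ac)
  also have "\<dots> = (-1) ^ (D + q + a * (2 * q + 1) + 2 * a * a) * (-1) ^ (m * q + D) *
      ((\<i>/2) ^ q * 2 ^ q) * (4 ^ a * omega_coeff m)"
    unfolding parity i2 power_add[of "-1::complex" "D + q + a * (2 * q + 1) + 2 * a * a" "m * q + D"]
    by (simp only: mult_ac)
  also have "\<dots> = (-1) ^ (k * (k + 1) div 2) * 2 ^ k * omega_coeff (m + q)"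
  proof -
    have "(2::complex) ^ k = 2 ^ q * 4 ^ a" unfolding k_def q_def by (simp add: power_add power_mult)
    moreover have "omega_coeff (m + q) = omega_coeff m * (\<i>/2) ^ q * (-1) ^ (m * q + D)"
      using omega_coeff_add[of m q] unfolding D_def .
    ultimately show ?thesis unfolding kdiv by (simp only: mult_ac)
  qed
  finally show ?thesis .
qed

lemma diagonal_constant:
  assumes S: "S \<subseteq> letters n" and c: "card S = k"
  shows "conj_I_coeff n S * ((-4) ^ card (paired_idx n S) * pair_sign n S S *
      omega_coeff (n - card (unpaired n S)) * (-1) ^ card (paired_idx n S))
    = (-1) ^ (k * (k + 1) div 2) * 2 ^ k * omega_coeff n"
proof -
  define Q where "Q = unpaired n S"
  define a where "a = card (paired_idx n S)"
  define h where "h = hol_deg n Q"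
  define t where "t = antihol_deg n Q"
  have QL: "Q \<subseteq> letters n" using S unpaired_subset unfolding Q_def by blast
  have q: "card Q = h + t" using hol_deg_add_antihol_deg[OF QL] unfolding h_def t_def by simp
  have k: "k = h + t + 2 * a" using card_unpaired_paired_idx[OF S] c q unfolding Q_def a_def by simp
  have "card Q \<le> n" using card_idx_of_unpaired[OF S] card_mono[OF finite_lessThan idx_of_subset, of n Q]
    unfolding Q_def by simp
  then have n: "omega_coeff (n - (h + t) + (h + t)) = omega_coeff n" using q by simp
  have decomp: "S = conj_pairs n (paired_idx n S) \<union> Q" "conj_pairs n (paired_idx n S) \<inter> Q = {}"
    using conj_pairs_Un_unpaired[OF S] unfolding Q_def unpaired_def by auto
  have fin: "finite (conj_pairs n (paired_idx n S))" "finite Q"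
    using finite_subset_lessThan[OF paired_idx_subset] finite_subset[OF QL] by auto
  have "hol_deg n S = a + h" "antihol_deg n S = a + t"
    using hol_deg_Un[OF fin decomp(2)] antihol_deg_Un[OF fin decomp(2)] decomp(1)
      hol_deg_conj_pairs[OF paired_idx_subset] antihol_deg_conj_pairs[OF paired_idx_subset]
    unfolding a_def h_def t_def by simp_all
  then have "conj_I_coeff n S = (-1) ^ ((a + h) * (a + t)) * ((-\<i>) ^ h * \<i> ^ t)"
    unfolding conj_I_coeff_def imaginary_unit_powi_diff[of "a + h" "a + t", symmetric] by (simp add: imaginary_unit_powi_diff)
  then show ?thesis
    using diagonal_constant_arith[of a h t "n - card Q"] pair_sign_diagonal[OF S]
    unfolding Q_def[symmetric] a_def[symmetric] h_def[symmetric] t_def[symmetric] q k n by simp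
qed

definition paired_subsets :: "nat \<Rightarrow> nat \<Rightarrow> nat set \<Rightarrow> nat set set" where
  "paired_subsets n l S = {J. J \<subseteq> paired_idx n S \<and> card J = l}"

lemma finite_paired_subsets[simp]: "finite (paired_subsets n l S)"
  unfolding paired_subsets_def
  by (rule finite_subset[of _ "Pow (paired_idx n S)"]) (auto intro: finite_subset_lessThan[OF paired_idx_subset])

lemma sum_pair_term:
  assumes S1: "S1 \<subseteq> letters n" and S2: "S2 \<subseteq> letters n" and QQ: "unpaired n S1 = unpaired n S2"
    and c1: "card S1 = k" and c2: "card S2 = k"
  shows "Lam_coeff l * Lam_coeff l *
      (\<Sum>J1\<in>paired_subsets n l S1. \<Sum>J2\<in>paired_subsets n l S2. pair_term n k l S1 S2 J1 J2) =
    (-4) ^ card (paired_idx n S1) * pair_sign n S1 S2 * omega_coeff (n - card (unpaired n S1)) *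
      of_int (\<Sum>J1\<in>paired_subsets n l S1. \<Sum>J2\<in>paired_subsets n l S2.
        if (paired_idx n S1 - J1) \<inter> (paired_idx n S2 - J2) = {} then 1 else 0)"
proof (cases "l \<le> card (paired_idx n S1)")
  case True
  let ?a = "card (paired_idx n S1)"
  let ?C = "pair_sign n S1 S2 * omega_coeff (n - card (unpaired n S1))"
  let ?N = "\<Sum>J1\<in>paired_subsets n l S1. \<Sum>J2\<in>paired_subsets n l S2.
    if (paired_idx n S1 - J1) \<inter> (paired_idx n S2 - J2) = {} then 1 else 0::int"
  have pow: "((-4) ^ ?a :: complex) = (-4) ^ l * ((-1) ^ (?a - l) * 4 ^ (?a - l))"
    using True by (simp add: power_mult_distrib[symmetric] flip: power_add)
  have "(\<Sum>J1\<in>paired_subsets n l S1. \<Sum>J2\<in>paired_subsets n l S2. pair_term n k l S1 S2 J1 J2) =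
      (\<Sum>J1\<in>paired_subsets n l S1. \<Sum>J2\<in>paired_subsets n l S2. (-1) ^ (?a - l) * 4 ^ (?a - l) * ?C *
        of_int (if (paired_idx n S1 - J1) \<inter> (paired_idx n S2 - J2) = {} then 1 else 0))"
    by (intro sum.cong refl) (auto simp: paired_subsets_def pair_term_eq[OF S1 S2 QQ c1 c2])
  also have "\<dots> = (-1) ^ (?a - l) * 4 ^ (?a - l) * ?C * of_int ?N"
    by (simp only: of_int_sum sum_distrib_left)
  finally show ?thesis unfolding Lam_coeff_square pow by (simp only: mult_ac)
next
  case False
  then have "paired_subsets n l S1 = {}"
    using card_mono[OF finite_subset_lessThan[OF paired_idx_subset]] by (fastforce simp: paired_subsets_def)
  then show ?thesis by simp
qed

lemma weighted_sum_pair_term: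
  fixes b :: "nat \<Rightarrow> int"
  assumes b0: "b 0 = 1" and brec: "\<forall>p\<ge>1. (\<Sum>l=0..p. (-1) ^ l * int (p choose l) ^ 2 * b l) = 0"
    and S1: "S1 \<subseteq> letters n" and S2: "S2 \<subseteq> letters n" and c1: "card S1 = k" and c2: "card S2 = k"
  shows "conj_I_coeff n S2 * (\<Sum>l=0..n. (-1) ^ l * of_int (b l) * (Lam_coeff l * Lam_coeff l) *
            (\<Sum>J1\<in>paired_subsets n l S1. \<Sum>J2\<in>paired_subsets n l S2. pair_term n k l S1 S2 J1 J2))
       = (if S1 = S2 then (-1) ^ (k * (k + 1) div 2) * 2 ^ k * omega_coeff n else 0)"
proof (cases "unpaired n S1 = unpaired n S2")
  case True
  define A1 where "A1 = paired_idx n S1"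
  define A2 where "A2 = paired_idx n S2"
  define C where "C = (-4) ^ card A1 * pair_sign n S1 S2 * omega_coeff (n - card (unpaired n S1))"
  have fin: "finite A1" "finite A2" using finite_subset_lessThan[OF paired_idx_subset] A1_def A2_def by auto
  have ca2: "card A2 = card A1"
    using card_unpaired_paired_idx[OF S1] card_unpaired_paired_idx[OF S2] c1 c2 True
    unfolding A1_def A2_def by simp
  have an: "card A1 \<le> n" using card_mono[OF finite_lessThan paired_idx_subset] unfolding A1_def by simp
  define N where "N l = (\<Sum>J1 | J1 \<subseteq> A1 \<and> card J1 = l.
    \<Sum>J2 | J2 \<subseteq> A2 \<and> card J2 = l. if (A1 - J1) \<inter> (A2 - J2) = {} then 1 else 0::int)" for l
  have "(\<Sum>l=0..n. (-1) ^ l * of_int (b l) * (Lam_coeff l * Lam_coeff l) *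
        (\<Sum>J1\<in>paired_subsets n l S1. \<Sum>J2\<in>paired_subsets n l S2. pair_term n k l S1 S2 J1 J2)) =
      (\<Sum>l=0..n. (-1) ^ l * of_int (b l) * (C * of_int (N l)))"
  proof (intro sum.cong refl)
    fix l
    show "(-1) ^ l * of_int (b l) * (Lam_coeff l * Lam_coeff l) *
        (\<Sum>J1\<in>paired_subsets n l S1. \<Sum>J2\<in>paired_subsets n l S2. pair_term n k l S1 S2 J1 J2) =
      (-1) ^ l * of_int (b l) * (C * of_int (N l))"
      using sum_pair_term[OF S1 S2 True c1 c2, of l]
      unfolding C_def N_def A1_def A2_def paired_subsets_def by (simp only: mult.assoc)
  qed
  also have "\<dots> = C * of_int (\<Sum>l=0..n. (-1) ^ l * b l * N l)"
    by (simp add: sum_distrib_left mult_ac)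
  also have "\<dots> = C * (if A1 = A2 then (-1) ^ card A1 else 0)"
    using sum_b_disjoint_complements[OF b0 brec fin refl ca2 an] unfolding N_def by simp
  finally show ?thesis
    using conj_pairs_Un_unpaired[OF S1] conj_pairs_Un_unpaired[OF S2] True diagonal_constant[OF S2 c2]
    unfolding A1_def A2_def C_def by (auto simp: mult_ac)
next
  case False
  then have "pair_term n k l S1 S2 J1 J2 = 0" if "J1 \<in> paired_subsets n l S1" "J2 \<in> paired_subsets n l S2" for l J1 J2
    using that pair_term_eq_0[OF S1 S2 False] by (simp add: paired_subsets_def)
  then show ?thesis using False by auto
qed

section \<open>Expanding the top coefficient\<close>

lemma sum_free_subsets_reindex:
  fixes h :: "nat set \<Rightarrow> nat set \<Rightarrow> complex"
  shows "(\<Sum>A\<in>Pow (letters n). \<Sum>J\<in>free_subsets n l A. h A J) = (\<Sum>S\<in>Pow (letters n). \<Sum>J\<in>paired_subsets n l S. h (S - conj_pairs n J) J)"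
proof -
  have "(\<Sum>A\<in>Pow (letters n). \<Sum>J\<in>free_subsets n l A. h A J) = (\<Sum>(A,J)\<in>Sigma (Pow (letters n)) (free_subsets n l). h A J)"
    by (rule sum.Sigma) auto
  also have "\<dots> = (\<Sum>(S,J)\<in>Sigma (Pow (letters n)) (paired_subsets n l). h (S - conj_pairs n J) J)"
  proof (rule sum.reindex_bij_witness[where i = "\<lambda>(S,J). (S - conj_pairs n J, J)" and j = "\<lambda>(A,J). (A \<union> conj_pairs n J, J)"])
    fix x assume "x \<in> Sigma (Pow (letters n)) (free_subsets n l)"
    then obtain A J where x: "x = (A,J)" "A \<subseteq> letters n" "J \<subseteq> free_idx n A" "card J = l" by (auto simp: free_subsets_def)
    have Jn: "J \<subseteq> {..<n}" using x(3) free_idx_subset by blast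
    have d: "conj_pairs n J \<inter> A = {}" using conj_pairs_free_idx_disjoint[OF x(3)] .
    show "(\<lambda>(S,J). (S - conj_pairs n J, J)) ((\<lambda>(A,J). (A \<union> conj_pairs n J, J)) x) = x" using x d by auto
    have "J \<subseteq> paired_idx n (A \<union> conj_pairs n J)" using Jn by (auto simp: paired_idx_def conj_pairs_def)
    then show "(\<lambda>(A,J). (A \<union> conj_pairs n J, J)) x \<in> Sigma (Pow (letters n)) (paired_subsets n l)"
      using x conj_pairs_subset_letters[OF Jn] by (auto simp: paired_subsets_def)
    show "(case (\<lambda>(A,J). (A \<union> conj_pairs n J, J)) x of (S,J) \<Rightarrow> h (S - conj_pairs n J) J) = (case x of (A,J) \<Rightarrow> h A J)"
      using x d by (auto simp: Un_Diff Diff_triv Int_commute)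
  next
    fix y assume "y \<in> Sigma (Pow (letters n)) (paired_subsets n l)"
    then obtain S J where y: "y = (S,J)" "S \<subseteq> letters n" "J \<subseteq> paired_idx n S" "card J = l" by (auto simp: paired_subsets_def)
    have "conj_pairs n J \<subseteq> S" using conj_pairs_mono[OF y(3)] conj_pairs_paired_idx_subset by blast
    then show "(\<lambda>(A,J). (A \<union> conj_pairs n J, J)) ((\<lambda>(S,J). (S - conj_pairs n J, J)) y) = y" using y by auto
    have "J \<subseteq> free_idx n (S - conj_pairs n J)" using y(3) by (auto simp: free_idx_def paired_idx_def conj_pairs_def conj_pair_def)
    then show "(\<lambda>(S,J). (S - conj_pairs n J, J)) y \<in> Sigma (Pow (letters n)) (free_subsets n l)"
      using y by (auto simp: free_subsets_def)
  qed
  also have "\<dots> = (\<Sum>S\<in>Pow (letters n). \<Sum>J\<in>paired_subsets n l S. h (S - conj_pairs n J) J)"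
    by (rule sum.Sigma[symmetric]) auto
  finally show ?thesis .
qed

lemma sum_Pow_letters_swap_set:
  fixes f :: "nat set \<Rightarrow> complex"
  shows "(\<Sum>T\<in>Pow (letters n). f T) = (\<Sum>S\<in>Pow (letters n). f (swap_set n S))"
  by (rule sum.reindex_bij_witness[where i = "swap_set n" and j = "swap_set n"])
     (auto simp: swap_set_swap_set swap_set_subset_letters)

lemma wedge_wedge_top:
  fixes X Y Z :: form
  shows "wedge n (wedge n X Y) Z (letters n) = (\<Sum>A\<in>Pow (letters n). \<Sum>B\<in>Pow (letters n).
     if A \<inter> B = {} then shuffle_sign A B * shuffle_sign (A \<union> B) (letters n - (A \<union> B)) * X A * Y B * Z (letters n - (A \<union> B)) else 0)"
proof -
  let ?L = "letters n"
  let ?g = "\<lambda>A B. shuffle_sign A B * shuffle_sign (A \<union> B) (?L - (A \<union> B)) * X A * Y B * Z (?L - (A \<union> B))"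
  let ?D = "{(A,B). A \<subseteq> ?L \<and> B \<subseteq> ?L \<and> A \<inter> B = {}}"
  have "wedge n (wedge n X Y) Z ?L = (\<Sum>S\<in>Pow ?L. \<Sum>S'\<in>Pow S. shuffle_sign S (?L - S) * (shuffle_sign S' (S - S') * X S' * Y (S - S')) * Z (?L - S))"
    unfolding wedge_shuffle_sign by (auto intro!: sum.cong simp: sum_distrib_left sum_distrib_right)
  also have "\<dots> = (\<Sum>(S,S')\<in>Sigma (Pow ?L) Pow. shuffle_sign S (?L - S) * (shuffle_sign S' (S - S') * X S' * Y (S - S')) * Z (?L - S))"
    by (rule sum.Sigma) (auto intro: finite_subset)
  also have "\<dots> = (\<Sum>(A,B)\<in>?D. ?g A B)"
  proof (rule sum.reindex_bij_witness[where i = "\<lambda>(A,B). (A \<union> B, A)" and j = "\<lambda>(S,S'). (S', S - S')"])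
    fix x assume "x \<in> Sigma (Pow ?L) Pow"
    then obtain S S' where x: "x = (S,S')" "S \<subseteq> ?L" "S' \<subseteq> S" by auto
    show "(\<lambda>(A,B). (A \<union> B, A)) ((\<lambda>(S,S'). (S', S - S')) x) = x" using x by auto
    show "(\<lambda>(S,S'). (S', S - S')) x \<in> ?D" using x by auto
    show "(case (\<lambda>(S,S'). (S', S - S')) x of (A,B) \<Rightarrow> ?g A B) =
        (case x of (S,S') \<Rightarrow> shuffle_sign S (?L - S) * (shuffle_sign S' (S - S') * X S' * Y (S - S')) * Z (?L - S))"
      using x by (simp add: Un_absorb1 algebra_simps)
  next
    fix y assume "y \<in> ?D"
    then obtain A B where y: "y = (A,B)" "A \<subseteq> ?L" "B \<subseteq> ?L" "A \<inter> B = {}" by auto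
    show "(\<lambda>(S,S'). (S', S - S')) ((\<lambda>(A,B). (A \<union> B, A)) y) = y" using y by auto
    show "(\<lambda>(A,B). (A \<union> B, A)) y \<in> Sigma (Pow ?L) Pow" using y by auto
  qed
  also have "\<dots> = (\<Sum>(A,B)\<in>Pow ?L \<times> Pow ?L. if A \<inter> B = {} then ?g A B else 0)"
    by (rule sum.mono_neutral_cong_left) (auto simp: disjoint_iff split: if_splits)
  also have "\<dots> = (\<Sum>A\<in>Pow ?L. \<Sum>B\<in>Pow ?L. if A \<inter> B = {} then ?g A B else 0)"
    by (rule sum.cartesian_product[symmetric])
  finally show ?thesis .
qed

lemma Lam_pow_nonzero_card:
  assumes u: "is_kform n k u" and nz: "Lam_pow n l u T \<noteq> 0"
  shows "T \<subseteq> letters n \<and> card T + 2 * l = k"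
proof -
  have uf: "is_form n u" using u by (simp add: is_kform_def)
  have T: "T \<subseteq> letters n"
  proof (rule ccontr)
    assume "\<not> T \<subseteq> letters n"
    then have "Lam_pow n l u T = 0" using Lam_pow_eq[OF uf, of l T] by simp
    then show False using nz by simp
  qed
  have "(\<Sum>J\<in>free_subsets n l T. shuffle_sign (conj_pairs n J) T * u (T \<union> conj_pairs n J)) \<noteq> 0"
  proof
    assume "(\<Sum>J\<in>free_subsets n l T. shuffle_sign (conj_pairs n J) T * u (T \<union> conj_pairs n J)) = 0"
    then have "Lam_pow n l u T = 0" using Lam_pow_eq[OF uf, of l T] T by simp
    then show False using nz by simp
  qed
  then obtain J where J: "J \<in> free_subsets n l T" "shuffle_sign (conj_pairs n J) T * u (T \<union> conj_pairs n J) \<noteq> 0"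
    using sum.not_neutral_contains_not_neutral by blast
  have uJ: "u (T \<union> conj_pairs n J) \<noteq> 0" using J(2) by auto
  have Jf: "J \<subseteq> free_idx n T" "card J = l" using J(1) unfolding free_subsets_def by auto
  have Jn: "J \<subseteq> {..<n}" using Jf(1) free_idx_subset by blast
  have fT: "finite T" using T by (rule finite_subset) simp
  have "card (T \<union> conj_pairs n J) = k" using uJ u unfolding is_kform_def by blast
  moreover have "card (T \<union> conj_pairs n J) = card T + 2 * l"
  proof -
    have "T \<inter> conj_pairs n J = {}" using conj_pairs_free_idx_disjoint[OF Jf(1)] by blast
    then show ?thesis using card_Un_disjoint[of T "conj_pairs n J"] fT finite_subset_lessThan[OF Jn] card_conj_pairs[OF Jn] Jf(2) by simp
  qed
  ultimately show ?thesis using T by simp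
qed

lemma Lam_pow_mult_Lam_pow:
  assumes "is_form n u" "is_form n w" "A \<subseteq> letters n" "B \<subseteq> letters n"
  shows "Lam_pow n l u A * Lam_pow n l w B = Lam_coeff l * Lam_coeff l *
    (\<Sum>J1\<in>free_subsets n l A. \<Sum>J2\<in>free_subsets n l B.
      shuffle_sign (conj_pairs n J1) A * u (A \<union> conj_pairs n J1) *
      (shuffle_sign (conj_pairs n J2) B * w (B \<union> conj_pairs n J2)))"
  using assms by (simp add: Lam_pow_eq sum_product mult_ac)

lemma top_coefficient_expansion:
  fixes u :: form and k l n :: nat
  assumes uf: "is_form n u"
  defines "w \<equiv> fconj n (Iop n u)"
  shows "wedge n (wedge n (Lam_pow n l u) (Lam_pow n l w)) (omega_pow n (int n - int k + 2 * int l)) (letters n)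
   = Lam_coeff l * Lam_coeff l * (\<Sum>S1\<in>Pow (letters n). \<Sum>S2\<in>Pow (letters n).
       u S1 * cnj (u S2) * conj_I_coeff n S2 *
       (\<Sum>J1\<in>paired_subsets n l S1. \<Sum>J2\<in>paired_subsets n l S2. pair_term n k l S1 S2 J1 J2))"
proof -
  let ?L = "letters n"
  let ?Z = "omega_pow n (int n - int k + 2 * int l)"
  have wf: "is_form n w" unfolding w_def is_form_def by (simp add: fconj_Iop_eq)
  define core where "core A B J1 J2 = (if A \<inter> B = {} then shuffle_sign A B *
      shuffle_sign (A \<union> B) (?L - (A \<union> B)) * shuffle_sign (conj_pairs n J1) A *
      shuffle_sign (conj_pairs n J2) B * ?Z (?L - (A \<union> B)) else 0)" for A B J1 J2
  define Phi where "Phi A J1 B J2 = core A B J1 J2 * u (A \<union> conj_pairs n J1) * w (B \<union> conj_pairs n J2)"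
    for A J1 B J2
  have "wedge n (wedge n (Lam_pow n l u) (Lam_pow n l w)) ?Z ?L =
      (\<Sum>A\<in>Pow ?L. \<Sum>B\<in>Pow ?L. Lam_coeff l * Lam_coeff l *
        (\<Sum>J1\<in>free_subsets n l A. \<Sum>J2\<in>free_subsets n l B. Phi A J1 B J2))"
    unfolding wedge_wedge_top
  proof (intro sum.cong refl)
    fix A B assume AB: "A \<in> Pow ?L" "B \<in> Pow ?L"
    let ?K = "shuffle_sign A B * shuffle_sign (A \<union> B) (?L - (A \<union> B)) * ?Z (?L - (A \<union> B))"
    have "(if A \<inter> B = {} then shuffle_sign A B * shuffle_sign (A \<union> B) (?L - (A \<union> B)) *
        Lam_pow n l u A * Lam_pow n l w B * ?Z (?L - (A \<union> B)) else 0) =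
      (if A \<inter> B = {} then ?K * (Lam_pow n l u A * Lam_pow n l w B) else 0)"
      by (simp add: mult_ac)
    also have "\<dots> = Lam_coeff l * Lam_coeff l *
        (\<Sum>J1\<in>free_subsets n l A. \<Sum>J2\<in>free_subsets n l B. Phi A J1 B J2)"
      using AB by (cases "A \<inter> B = {}")
        (simp_all add: Lam_pow_mult_Lam_pow[OF uf wf] Phi_def core_def sum_distrib_left mult_ac)
    finally show "(if A \<inter> B = {} then shuffle_sign A B * shuffle_sign (A \<union> B) (?L - (A \<union> B)) *
        Lam_pow n l u A * Lam_pow n l w B * ?Z (?L - (A \<union> B)) else 0) =
      Lam_coeff l * Lam_coeff l * (\<Sum>J1\<in>free_subsets n l A. \<Sum>J2\<in>free_subsets n l B. Phi A J1 B J2)" .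
  qed
  also have "\<dots> = Lam_coeff l * Lam_coeff l * (\<Sum>A\<in>Pow ?L. \<Sum>J1\<in>free_subsets n l A.
      \<Sum>B\<in>Pow ?L. \<Sum>J2\<in>free_subsets n l B. Phi A J1 B J2)"
    by (simp add: sum_distrib_left) (rule sum.cong[OF refl], rule sum.swap)
  also have "\<dots> = Lam_coeff l * Lam_coeff l * (\<Sum>S1\<in>Pow ?L. \<Sum>J1\<in>paired_subsets n l S1.
      \<Sum>S2\<in>Pow ?L. \<Sum>J2\<in>paired_subsets n l (swap_set n S2).
        Phi (S1 - conj_pairs n J1) J1 (swap_set n S2 - conj_pairs n J2) J2)"
    by (simp only: sum_free_subsets_reindex
        sum_Pow_letters_swap_set[where f = "\<lambda>T. \<Sum>J2\<in>paired_subsets n l T. Phi _ _ (T - conj_pairs n J2) J2"])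
  also have "\<dots> = Lam_coeff l * Lam_coeff l * (\<Sum>S1\<in>Pow ?L. \<Sum>J1\<in>paired_subsets n l S1.
      \<Sum>S2\<in>Pow ?L. \<Sum>J2\<in>paired_subsets n l S2.
        pair_term n k l S1 S2 J1 J2 * (u S1 * cnj (u S2) * conj_I_coeff n S2))"
  proof (intro arg_cong[where f = "\<lambda>x. Lam_coeff l * Lam_coeff l * x"] sum.cong refl)
    fix S1 J1 S2 J2 assume J1: "J1 \<in> paired_subsets n l S1" and S2: "S2 \<in> Pow ?L"
    show "paired_subsets n l (swap_set n S2) = paired_subsets n l S2"
      using S2 paired_idx_swap_set by (simp add: paired_subsets_def)
    assume J2: "J2 \<in> paired_subsets n l S2"
    have "S1 - conj_pairs n J1 \<union> conj_pairs n J1 = S1"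
      using J1 conj_pairs_mono[of J1 "paired_idx n S1" n] conj_pairs_paired_idx_subset[of n S1]
      by (auto simp: paired_subsets_def)
    moreover have "swap_set n S2 - conj_pairs n J2 \<union> conj_pairs n J2 = swap_set n S2"
      using J2 S2 conj_pairs_mono[of J2 "paired_idx n S2" n] paired_idx_swap_set[of S2 n]
        conj_pairs_paired_idx_subset[of n "swap_set n S2"] by (auto simp: paired_subsets_def)
    moreover have "w (swap_set n S2) = conj_I_coeff n S2 * cnj (u S2)"
      using S2 unfolding w_def by (simp add: fconj_Iop_eq swap_set_subset_letters swap_set_swap_set)
    ultimately show "Phi (S1 - conj_pairs n J1) J1 (swap_set n S2 - conj_pairs n J2) J2 =
        pair_term n k l S1 S2 J1 J2 * (u S1 * cnj (u S2) * conj_I_coeff n S2)"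
      unfolding Phi_def by (simp add: pair_term_def core_def Let_def mult_ac)
  qed
  also have "\<dots> = Lam_coeff l * Lam_coeff l * (\<Sum>S1\<in>Pow ?L. \<Sum>S2\<in>Pow ?L.
      u S1 * cnj (u S2) * conj_I_coeff n S2 *
      (\<Sum>J1\<in>paired_subsets n l S1. \<Sum>J2\<in>paired_subsets n l S2. pair_term n k l S1 S2 J1 J2))"
    by (rule arg_cong[where f = "\<lambda>x. Lam_coeff l * Lam_coeff l * x"], rule sum.cong[OF refl], subst sum.swap)
      (simp add: sum_distrib_left sum_distrib_right mult_ac)
  finally show ?thesis .
qed

lemma top_coefficient_only:
  assumes u: "is_kform n k u" and v: "is_kform n k v" and R: "R \<noteq> letters n"
  shows "wedge n (wedge n (Lam_pow n l u) (Lam_pow n l v)) (omega_pow n (int n - int k + 2 * int l)) R = 0"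
proof (cases "R \<subseteq> letters n")
  case False then show ?thesis by (simp add: wedge_shuffle_sign)
next
  case RL: True
  let ?X = "Lam_pow n l u" and ?Y = "Lam_pow n l v" and ?Z = "omega_pow n (int n - int k + 2 * int l)"
  have fR: "finite R" using RL by (rule finite_subset) simp
  have "(\<Sum>S\<in>Pow R. shuffle_sign S (R - S) * wedge n ?X ?Y S * ?Z (R - S)) = 0"
  proof (rule sum.neutral, rule ballI)
    fix S assume S: "S \<in> Pow R"
    show "shuffle_sign S (R - S) * wedge n ?X ?Y S * ?Z (R - S) = 0"
    proof (rule ccontr)
      assume h: "shuffle_sign S (R - S) * wedge n ?X ?Y S * ?Z (R - S) \<noteq> 0"
      then have W: "wedge n ?X ?Y S \<noteq> 0" and Z: "?Z (R - S) \<noteq> 0" by auto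
      have SL: "S \<subseteq> letters n" using S RL by auto
      have "(\<Sum>S'\<in>Pow S. shuffle_sign S' (S - S') * ?X S' * ?Y (S - S')) \<noteq> 0" using W SL by (simp add: wedge_shuffle_sign)
      then obtain S' where S': "S' \<in> Pow S" "shuffle_sign S' (S - S') * ?X S' * ?Y (S - S') \<noteq> 0"
        using sum.not_neutral_contains_not_neutral by blast
      have c1: "card S' + 2 * l = k" using Lam_pow_nonzero_card[OF u] S'(2) by auto
      have c2: "card (S - S') + 2 * l = k" using Lam_pow_nonzero_card[OF v] S'(2) by auto
      have cz: "0 \<le> int n - int k + 2 * int l" "card (R - S) = 2 * nat (int n - int k + 2 * int l)"
        using omega_pow_nonzero_card[OF Z] by auto
      have SR: "S \<subseteq> R" and S'S: "S' \<subseteq> S" using S S' by simp_all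
      have fS: "finite S" by (rule finite_subset[OF SR fR])
      have "card (S - S') = card S - card S'" "card (R - S) = card R - card S"
        using S'S SR fS fR by (simp_all add: card_Diff_subset finite_subset)
      moreover have "card S' \<le> card S" "card S \<le> card R" using S'S SR fS fR by (simp_all add: card_mono)
      ultimately have "card R = 2 * n" using c1 c2 cz by linarith
      then have "R = letters n" using RL card_subset_eq[of "letters n" R] by (simp add: letters_def)
      then show False using R by simp
    qed
  qed
  then show ?thesis using RL by (simp add: wedge_shuffle_sign)
qed

lemma top_coefficient_sum:
  fixes b :: "nat \<Rightarrow> int"
  assumes u: "is_kform n k u" and b0: "b 0 = 1"
    and brec: "\<forall>p\<ge>1. (\<Sum>l=0..p. (-1) ^ l * int (p choose l) ^ 2 * b l) = 0"
  shows "(\<Sum>l=0..n. (-1) ^ l * of_int (b l) *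
      wedge n (wedge n (Lam_pow n l u) (Lam_pow n l (fconj n (Iop n u))))
        (omega_pow n (int n - int k + 2 * int l)) (letters n)) =
    (-1) ^ (k * (k + 1) div 2) * form_inner n u u * omega_coeff n"
proof -
  let ?L = "letters n"
  define c :: complex where "c = (-1) ^ (k * (k + 1) div 2) * omega_coeff n"
  define P where "P l S1 S2 = (\<Sum>J1\<in>paired_subsets n l S1. \<Sum>J2\<in>paired_subsets n l S2.
    pair_term n k l S1 S2 J1 J2)" for l S1 S2
  have uf: "is_form n u" using u by (simp add: is_kform_def)
  have "(\<Sum>l=0..n. (-1) ^ l * of_int (b l) *
      wedge n (wedge n (Lam_pow n l u) (Lam_pow n l (fconj n (Iop n u))))
        (omega_pow n (int n - int k + 2 * int l)) ?L) =
    (\<Sum>S1\<in>Pow ?L. \<Sum>S2\<in>Pow ?L. u S1 * cnj (u S2) * (conj_I_coeff n S2 *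
      (\<Sum>l=0..n. (-1) ^ l * of_int (b l) * (Lam_coeff l * Lam_coeff l) * P l S1 S2)))"
    unfolding top_coefficient_expansion[OF uf] P_def
    by (simp add: sum_distrib_left mult_ac sum.swap[of _ "{0..n}"])
  also have "\<dots> = (\<Sum>S1\<in>Pow ?L. \<Sum>S2\<in>Pow ?L. if S1 = S2 then u S1 * cnj (u S1) * 2 ^ card S1 * c else 0)"
  proof (intro sum.cong refl)
    fix S1 S2 assume "S1 \<in> Pow ?L" "S2 \<in> Pow ?L"
    then show "u S1 * cnj (u S2) * (conj_I_coeff n S2 *
        (\<Sum>l=0..n. (-1) ^ l * of_int (b l) * (Lam_coeff l * Lam_coeff l) * P l S1 S2)) =
      (if S1 = S2 then u S1 * cnj (u S1) * 2 ^ card S1 * c else 0)"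
      using weighted_sum_pair_term[OF b0 brec, of S1 n S2 k] u unfolding is_kform_def P_def c_def
      by (cases "card S1 = k \<and> card S2 = k") (auto simp: mult_ac)
  qed
  also have "\<dots> = (-1) ^ (k * (k + 1) div 2) * form_inner n u u * omega_coeff n"
    by (simp add: sum.delta' form_inner_def sum_distrib_left sum_distrib_right c_def mult_ac)
  finally show ?thesis .
qed

theorem theorem1p1:
  fixes n k :: nat and u :: form and b :: "nat \<Rightarrow> int"
  assumes u: "is_kform n k u"
    and b0: "b 0 = 1"
    and brec: "\<forall>p\<ge>1. (\<Sum>l=0..p. (-1) ^ l * int (p choose l) ^ 2 * b l) = 0"
  shows "scale ((-1) ^ (k * (k + 1) div 2) * form_inner n u u) (omega_pow n (int n)) =
    (\<lambda>S. \<Sum>l=0..n. (-1) ^ l * of_int (b l) *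
        wedge n (wedge n (Lam_pow n l u) (Lam_pow n l (fconj n (Iop n u))))
          (omega_pow n (int n - int k + 2 * int l)) S)"
proof
  fix R
  show "scale ((-1) ^ (k * (k + 1) div 2) * form_inner n u u) (omega_pow n (int n)) R =
    (\<Sum>l=0..n. (-1) ^ l * of_int (b l) *
        wedge n (wedge n (Lam_pow n l u) (Lam_pow n l (fconj n (Iop n u))))
          (omega_pow n (int n - int k + 2 * int l)) R)"
  proof (cases "R = letters n")
    case True
    then show ?thesis using top_coefficient_sum[OF u b0 brec] by (simp add: scale_def omega_pow_top)
  next
    case False
    then show ?thesis using top_coefficient_only[OF u is_kform_fconj_Iop[OF u] False]
      by (simp add: scale_def omega_pow_top)
  qed
qed

end
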